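(* (i) For a decreasing $\Lambda:\mathbb{R}\to(0,1]$, $\mathrm{ES}_\Lambda=\min\{\rho:L^1\to\overline{\mathbb{R}}\mid\rho\ge\mathrm{VaR}_\Lambda\text{ and }\rho\text{ is quasi-convex and law invariant}\}$. (ii) For a decreasing $\Lambda:\mathbb{R}\to(0,1)$, $\mathrm{ES}_\Lambda=\min\{\rho:L^1\to\overline{\mathbb{R}}\mid\rho\ge\mathrm{VaR}^+_\Lambda\text{ and }\rho\text{ is quasi-convex and law invariant}\}$. (iii) For a decreasing $\Lambda:\mathbb{R}\to[0,1)$, $\mathrm{ES}_\Lambda=\min\{\rho:\underline{L}^1\to\overline{\mathbb{R}}\mid\rho\ge\mathrm{VaR}^+_\Lambda\text{ and }\rho\text{ is quasi-convex and law invariant}\}$ (with $\mathrm{ES}_\Lambda$ restricted to $\underline{L}^1$). Here "min" means that $\mathrm{ES}_\Lambda$ belongs to the set and is pointwise $\le$ every element of it. Moreover, for every decreasing $\Lambda:\mathbb{R}\to[0,1]$, $$\mathrm{ES}_\Lambda(X)=\inf_{x\in\mathbb{R}}\left(\mathrm{ES}_{\Lambda(x)}(X)\vee x\right),\quad X\in L^1.$$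
   Context: $(\Omega,\mathcal F,\mathbb P)$ is an atomless probability space, $L^0$ all random variables, $L^1$ integrable ones, $\underline{L}^1$ the elements of $L^1$ essentially bounded from below; $\overline{\mathbb{R}}=[-\infty,\infty]$; "decreasing" is weak; $\wedge=\min$, $\vee=\max$. For $\alpha\in[0,1]$, $X\in L^0$: $\mathrm{VaR}_\alpha(X)=\inf\{x\in\mathbb{R}:\mathbb P(X\le x)\ge\alpha\}$, $\mathrm{VaR}^+_\alpha(X)=\inf\{x\in\mathbb{R}:\mathbb P(X\le x)>\alpha\}$. For $X\in L^1$: $\mathrm{ES}_\alpha(X)=\frac{1}{1-\alpha}\int_\alpha^1\mathrm{VaR}_\beta(X)\,\mathrm d\beta$ for $\alpha<1$, $\mathrm{ES}_1(X)=\mathrm{VaR}_1(X)$. For decreasing $\Lambda:\mathbb{R}\to[0,1]$: $\mathrm{VaR}_\Lambda(X)=\inf\{x\in\mathbb{R}:\mathbb P(X\le x)\ge\Lambda(x)\}$, $\mathrm{VaR}^+_\Lambda(X)=\inf\{x\in\mathbb{R}:\mathbb P(X\le x)>\Lambda(x)\}$, $\mathrm{ES}_\Lambda(X)=\sup_{x\in\mathbb{R}}\left(\mathrm{ES}_{\Lambda(x)}(X)\wedge x\right)$, $X\in L^1$. Quasi-convex: $\rho(\gamma X+(1-\gamma)Y)\le\max\{\rho(X),\rho(Y)\}$; law invariant: $\rho(X)=\rho(Y)$ for equally distributed $X,Y$. *)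

theory Defs
  imports "HOL-Probability.Probability"
begin

definition atomless :: "'a measure \<Rightarrow> bool" where
  "atomless M \<longleftrightarrow> (\<forall>A\<in>sets M. 0 < measure M A \<longrightarrow>
     (\<exists>B\<in>sets M. B \<subseteq> A \<and> 0 < measure M B \<and> measure M B < measure M A))"

definition cdf_rv :: "'a measure \<Rightarrow> ('a \<Rightarrow> real) \<Rightarrow> real \<Rightarrow> real" where
  "cdf_rv M X x = measure M {\<omega> \<in> space M. X \<omega> \<le> x}"

definition L1 :: "'a measure \<Rightarrow> ('a \<Rightarrow> real) set" where
  "L1 M = {X. integrable M X}"

definition L1_bdd_below :: "'a measure \<Rightarrow> ('a \<Rightarrow> real) set" where
  "L1_bdd_below M = {X. integrable M X \<and> (\<exists>c. AE \<omega> in M. c \<le> X \<omega>)}"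

text \<open>Value-at-Risk (infimum taken in the extended reals; inf of empty set is +infinity).\<close>
definition VaR :: "'a measure \<Rightarrow> real \<Rightarrow> ('a \<Rightarrow> real) \<Rightarrow> ereal" where
  "VaR M \<alpha> X = Inf (ereal ` {x. cdf_rv M X x \<ge> \<alpha>})"

definition VaR_plus :: "'a measure \<Rightarrow> real \<Rightarrow> ('a \<Rightarrow> real) \<Rightarrow> ereal" where
  "VaR_plus M \<alpha> X = Inf (ereal ` {x. cdf_rv M X x > \<alpha>})"

definition ES :: "'a measure \<Rightarrow> real \<Rightarrow> ('a \<Rightarrow> real) \<Rightarrow> ereal" where
  "ES M \<alpha> X = (if \<alpha> < 1
      then ereal (1 / (1 - \<alpha>) * (LINT \<beta>:{\<alpha><..<1}|lborel. real_of_ereal (VaR M \<beta> X)))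
      else VaR M 1 X)"

definition VaR_Lambda :: "'a measure \<Rightarrow> (real \<Rightarrow> real) \<Rightarrow> ('a \<Rightarrow> real) \<Rightarrow> ereal" where
  "VaR_Lambda M \<Lambda> X = Inf (ereal ` {x. cdf_rv M X x \<ge> \<Lambda> x})"

definition VaR_plus_Lambda :: "'a measure \<Rightarrow> (real \<Rightarrow> real) \<Rightarrow> ('a \<Rightarrow> real) \<Rightarrow> ereal" where
  "VaR_plus_Lambda M \<Lambda> X = Inf (ereal ` {x. cdf_rv M X x > \<Lambda> x})"

definition ES_Lambda :: "'a measure \<Rightarrow> (real \<Rightarrow> real) \<Rightarrow> ('a \<Rightarrow> real) \<Rightarrow> ereal" where
  "ES_Lambda M \<Lambda> X = (SUP x::real. min (ES M (\<Lambda> x) X) (ereal x))"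

definition quasi_convex_on :: "('a \<Rightarrow> real) set \<Rightarrow> (('a \<Rightarrow> real) \<Rightarrow> ereal) \<Rightarrow> bool" where
  "quasi_convex_on D \<rho> \<longleftrightarrow> (\<forall>X\<in>D. \<forall>Y\<in>D. \<forall>\<gamma>\<in>{0..1::real}.
      \<rho> (\<lambda>\<omega>. \<gamma> * X \<omega> + (1 - \<gamma>) * Y \<omega>) \<le> max (\<rho> X) (\<rho> Y))"

definition law_invariant_on :: "'a measure \<Rightarrow> ('a \<Rightarrow> real) set \<Rightarrow> (('a \<Rightarrow> real) \<Rightarrow> ereal) \<Rightarrow> bool" where
  "law_invariant_on M D \<rho> \<longleftrightarrow> (\<forall>X\<in>D. \<forall>Y\<in>D.
      distr M borel X = distr M borel Y \<longrightarrow> \<rho> X = \<rho> Y)"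

definition is_min_qc_li_above :: "'a measure \<Rightarrow> ('a \<Rightarrow> real) set \<Rightarrow> (('a \<Rightarrow> real) \<Rightarrow> ereal)
    \<Rightarrow> (('a \<Rightarrow> real) \<Rightarrow> ereal) \<Rightarrow> bool" where
  "is_min_qc_li_above M D V \<rho> \<longleftrightarrow>
     ((\<forall>X\<in>D. V X \<le> \<rho> X) \<and> quasi_convex_on D \<rho> \<and> law_invariant_on M D \<rho>) \<and>
     (\<forall>\<rho>'. (\<forall>X\<in>D. V X \<le> \<rho>' X) \<and> quasi_convex_on D \<rho>' \<and> law_invariant_on M D \<rho>'
        \<longrightarrow> (\<forall>X\<in>D. \<rho> X \<le> \<rho>' X))"

end

theory Submission
  imports Defs
begin

(* Quasi-convexity of ES_Lambda reduces to that of each ES_alpha, which for alpha in (0,1) comes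
   from the Rockafellar-Uryasev formula; the bounds by VaR_Lambda and VaR+_Lambda follow from
   VaR_alpha <= ES_alpha. For minimality, take rho as in the statement, a level x and
   t < min (ES_(Lambda x) X) x. An atomless space carries a uniform variable U, and X has the law
   of q(U) for its quantile function q. Rotating [a, 1) by multiples of (1 - a)/n and averaging
   the n rearrangements of X obtained this way gives Y with rho Y <= rho X (law invariance and
   quasi-convexity), and on {U >= a} the average dominates a Riemann sum of q over [a, 1), which
   exceeds t for large n. Hence P(Y < t) <= a, and choosing a = Lambda x (for VaR+) or a slightly
   below Lambda x (for VaR) gives t <= VaR_Lambda Y <= rho Y <= rho X. *)

section \<open>Uniform random variables on atomless spaces\<close>

lemma (in prob_space) atomless_small_subset:
  assumes atomless: "atomless M" and A: "A \<in> sets M" "0 < measure M A" and e: "0 < e"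
  shows "\<exists>B\<in>sets M. B \<subseteq> A \<and> 0 < measure M B \<and> measure M B < e"
proof (rule ccontr)
  assume "\<not> ?thesis"
  then have large: "e \<le> measure M B" if "B \<in> sets M" "B \<subseteq> A" "0 < measure M B" for B
    using that by force
  define S where "S = {measure M B | B. B \<in> sets M \<and> B \<subseteq> A \<and> 0 < measure M B}"
  have S_ne: "S \<noteq> {}" and S_bdd: "bdd_below S"
    using A large by (auto simp: S_def intro!: bdd_belowI[of _ e])
  have m_le: "Inf S \<le> measure M B" if "B \<in> sets M" "B \<subseteq> A" "0 < measure M B" for B
    using that S_bdd by (intro cInf_lower) (auto simp: S_def)
  have "e \<le> Inf S"
    using S_ne large by (intro cInf_greatest) (auto simp: S_def)
  then have "Inf S < 2 * Inf S" using e by simp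
  then obtain x where "x \<in> S" "x < 2 * Inf S"
    using cInf_less_iff[OF S_ne S_bdd] by blast
  then obtain B where B: "B \<in> sets M" "B \<subseteq> A" "0 < measure M B" "measure M B < 2 * Inf S"
    unfolding S_def by blast
  obtain C where C: "C \<in> sets M" "C \<subseteq> B" "0 < measure M C" "measure M C < measure M B"
    using atomless B unfolding atomless_def by blast
  have BC: "measure M (B - C) = measure M B - measure M C"
    using B C by (simp add: finite_measure_Diff)
  \<comment> \<open>both parts of \<open>B\<close> have measure at least \<open>Inf S\<close>, but together less than \<open>2 * Inf S\<close>\<close>
  have "Inf S \<le> measure M C"
    using B C by (intro m_le) auto
  moreover have "Inf S \<le> measure M (B - C)"
    using B C BC by (intro m_le) auto
  ultimately show False using B BC by linarith
qed

lemma (in prob_space) ex_half_maximal_subset: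
  assumes S: "S \<in> sets M" and r: "0 \<le> r"
  shows "\<exists>D\<in>sets M. D \<subseteq> S \<and> measure M D \<le> r \<and>
    (\<forall>D'\<in>sets M. D' \<subseteq> S \<longrightarrow> measure M D' \<le> r \<longrightarrow> measure M D' \<le> 2 * measure M D)"
proof -
  define V where "V = {measure M D | D. D \<in> sets M \<and> D \<subseteq> S \<and> measure M D \<le> r}"
  have V_ne: "V \<noteq> {}" using r by (auto simp: V_def intro!: exI[of _ "{}"])
  have V_bdd: "bdd_above V" by (rule bdd_aboveI[of _ 1]) (auto simp: V_def)
  have le_Sup: "measure M D' \<le> Sup V" if "D' \<in> sets M" "D' \<subseteq> S" "measure M D' \<le> r" for D'
    using that by (intro cSup_upper[OF _ V_bdd]) (auto simp: V_def)
  show ?thesis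
  proof (cases "Sup V \<le> 0")
    case True
    then show ?thesis using r le_Sup by (intro bexI[of _ "{}"]) force+
  next
    case False
    then have "Sup V / 2 < Sup V" by simp
    then obtain D where "D \<in> sets M" "D \<subseteq> S" "measure M D \<le> r" "Sup V / 2 < measure M D"
      using less_cSup_iff[OF V_ne V_bdd] unfolding V_def by blast
    then show ?thesis using le_Sup by (intro bexI[of _ D]) force+
  qed
qed

lemma (in prob_space) ex_saturated_subset:
  assumes A: "A \<in> sets M" and c: "0 \<le> c"
  shows "\<exists>B\<in>sets M. B \<subseteq> A \<and> measure M B \<le> c \<and>
    (\<forall>D\<in>sets M. D \<subseteq> A - B \<longrightarrow> measure M B + measure M D \<le> c \<longrightarrow> measure M D = 0)"
proof -
  have "\<exists>D. C \<in> sets M \<longrightarrow> measure M C \<le> c \<longrightarrow> D \<in> sets M \<and> D \<subseteq> A - C \<and> measure M D \<le> c - measure M C \<and>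
      (\<forall>D'\<in>sets M. D' \<subseteq> A - C \<longrightarrow> measure M D' \<le> c - measure M C \<longrightarrow> measure M D' \<le> 2 * measure M D)" for C
    using ex_half_maximal_subset[of "A - C" "c - measure M C"] A by auto
  then obtain f where f: "\<And>C. C \<in> sets M \<Longrightarrow> measure M C \<le> c \<Longrightarrow>
      f C \<in> sets M \<and> f C \<subseteq> A - C \<and> measure M (f C) \<le> c - measure M C \<and>
      (\<forall>D\<in>sets M. D \<subseteq> A - C \<longrightarrow> measure M D \<le> c - measure M C \<longrightarrow> measure M D \<le> 2 * measure M (f C))"
    by metis
  \<comment> \<open>greedy exhaustion: each step adds at least half of what could still be added, and the
     increments tend to \<open>0\<close>\<close>
  define C where "C k = ((\<lambda>C. C \<union> f C) ^^ k) {}" for k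
  have C_Suc: "C (Suc k) = C k \<union> f (C k)" for k by (simp add: C_def)
  have C: "C k \<in> sets M \<and> C k \<subseteq> A \<and> measure M (C k) \<le> c" for k
  proof (induction k)
    case 0 then show ?case using c by (simp add: C_def)
  next
    case (Suc k)
    then have "measure M (C (Suc k)) = measure M (C k) + measure M (f (C k))"
      using f[of "C k"] unfolding C_Suc by (intro finite_measure_Union) auto
    then show ?case using f[of "C k"] Suc unfolding C_Suc by auto
  qed
  have measure_C_Suc: "measure M (C (Suc k)) = measure M (C k) + measure M (f (C k))" for k
    using f[of "C k"] C[of k] unfolding C_Suc by (intro finite_measure_Union) auto
  define B where "B = (\<Union>k. C k)"
  have B: "B \<in> sets M" "B \<subseteq> A" using C unfolding B_def by auto
  have CB: "measure M (C k) \<le> measure M B" for k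
    using C B unfolding B_def by (intro finite_measure_mono) auto
  have lim: "(\<lambda>k. measure M (C k)) \<longlonglongrightarrow> measure M B"
    unfolding B_def using C by (intro finite_Lim_measure_incseq incseq_SucI) (auto simp: C_Suc)
  then have "measure M B \<le> c"
    by (rule LIMSEQ_le_const2) (use C in auto)
  moreover have "measure M D = 0"
    if D: "D \<in> sets M" "D \<subseteq> A - B" "measure M B + measure M D \<le> c" for D
  proof -
    have "measure M D \<le> 2 * (measure M (C (Suc k)) - measure M (C k))" for k
    proof -
      have "D \<subseteq> A - C k" using D(2) unfolding B_def by blast
      moreover have "measure M D \<le> c - measure M (C k)" using D(3) CB[of k] by linarith
      ultimately show ?thesis using f[of "C k"] C[of k] D(1) measure_C_Suc[of k] by auto
    qed
    moreover have "(\<lambda>k. 2 * (measure M (C (Suc k)) - measure M (C k))) \<longlonglongrightarrow> 2 * (measure M B - measure M B)"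
      by (intro tendsto_intros LIMSEQ_Suc lim)
    ultimately have "measure M D \<le> 2 * (measure M B - measure M B)"
      by (intro LIMSEQ_le_const) auto
    then show ?thesis using measure_nonneg[of M D] by simp
  qed
  ultimately show ?thesis using B by blast
qed

lemma (in prob_space) atomless_subset_measure:
  assumes atomless: "atomless M" and A: "A \<in> sets M" and c: "0 \<le> c" "c \<le> measure M A"
  shows "\<exists>B\<in>sets M. B \<subseteq> A \<and> measure M B = c"
proof -
  obtain B where B: "B \<in> sets M" "B \<subseteq> A" "measure M B \<le> c"
    and saturated: "\<And>D. D \<in> sets M \<Longrightarrow> D \<subseteq> A - B \<Longrightarrow> measure M B + measure M D \<le> c \<Longrightarrow> measure M D = 0"
    using ex_saturated_subset[OF A c(1)] by blast
  have "measure M B = c"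
  proof (rule ccontr)
    assume "measure M B \<noteq> c"
    then have lt: "measure M B < c" using B by simp
    have "measure M (A - B) = measure M A - measure M B"
      using A B by (simp add: finite_measure_Diff)
    then obtain D where "D \<in> sets M" "D \<subseteq> A - B" "0 < measure M D" "measure M D < c - measure M B"
      using atomless_small_subset[OF atomless, of "A - B" "c - measure M B"] A B lt c by auto
    then show False using saturated[of D] by simp
  qed
  then show ?thesis using B by blast
qed

abbreviation unit_uniform :: "real measure" where
  "unit_uniform \<equiv> uniform_measure lborel {0<..<1}"

lemma prob_space_unit_uniform: "prob_space unit_uniform"
  by (intro prob_space_uniform_measure) auto

lemma measure_unit_uniform:
  "S \<in> sets borel \<Longrightarrow> measure unit_uniform S = measure lborel ({0<..<1} \<inter> S)"
  by simp

lemma measure_unit_uniform_Ico: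
  "S \<in> sets borel \<Longrightarrow> measure unit_uniform S = measure lborel ({0..<1} \<inter> S)"
proof -
  assume S: "S \<in> sets borel"
  have "{0..<1} \<inter> S = ({0<..<1} \<inter> S) \<union> ({0} \<inter> S)" by auto
  moreover have "{0} \<inter> S \<in> null_sets lborel"
    by (rule null_sets_subset[of "{0}"]) (use S in auto)
  ultimately show ?thesis using S by (simp add: measure_Un_null_set)
qed

lemma measure_Ioo01_atMost: "measure lborel ({0<..<1::real} \<inter> {..u}) = max 0 (min 1 u)"
proof -
  consider "u \<le> 0" | "0 < u" "u < 1" | "1 \<le> u" by linarith
  then show ?thesis
  proof cases
    case 1 then have "{0<..<1::real} \<inter> {..u} = {}" by auto
    then show ?thesis using 1 by simp
  next
    case 2 then have "{0<..<1::real} \<inter> {..u} = {0<..u}" by auto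
    then show ?thesis using 2 by simp
  next
    case 3 then have "{0<..<1::real} \<inter> {..u} = {0<..<1}" by auto
    then show ?thesis using 3 by simp
  qed
qed

lemma eq_unit_uniformI:
  assumes "real_distribution N" "\<And>u. measure N {..u} = max 0 (min 1 u)"
  shows "N = unit_uniform"
proof (rule cdf_unique[OF assms(1)])
  show "real_distribution unit_uniform"
    using prob_space_unit_uniform by (simp add: real_distribution_def real_distribution_axioms_def)
  show "cdf N = cdf unit_uniform"
    by (simp add: fun_eq_iff cdf_def assms(2) measure_Ioo01_atMost)
qed

lemma
  fixes f :: "real \<Rightarrow> real"
  assumes [measurable]: "f \<in> borel_measurable borel"
  shows integrable_unit_uniform: "integrable unit_uniform f \<longleftrightarrow> set_integrable lborel {0<..<1} f"
    and integral_unit_uniform: "integral\<^sup>L unit_uniform f = (LINT x:{0<..<1}|lborel. f x)"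
proof -
  have "unit_uniform = density lborel (\<lambda>x. ennreal (indicator {0<..<1} x))"
    by (simp add: uniform_measure_def divide_ennreal_def ennreal_indicator)
  then show "integrable unit_uniform f \<longleftrightarrow> set_integrable lborel {0<..<1} f"
    and "integral\<^sup>L unit_uniform f = (LINT x:{0<..<1}|lborel. f x)"
    by (simp_all add: set_integrable_def set_lebesgue_integral_def integrable_density integral_density)
qed

locale atomless_prob_space = prob_space +
  assumes atomless: "atomless M"
begin

definition halve :: "'a set \<Rightarrow> 'a set" where
  "halve S = (SOME B. B \<in> sets M \<and> B \<subseteq> S \<and> measure M B = measure M S / 2)"

lemma halve: assumes "S \<in> sets M"
  shows "halve S \<in> sets M" "halve S \<subseteq> S" "measure M (halve S) = measure M S / 2"
proof -
  have "\<exists>B. B \<in> sets M \<and> B \<subseteq> S \<and> measure M B = measure M S / 2"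
    using atomless_subset_measure[OF atomless assms, of "measure M S / 2"] by auto
  then have "halve S \<in> sets M \<and> halve S \<subseteq> S \<and> measure M (halve S) = measure M S / 2"
    unfolding halve_def by (rule someI_ex)
  then show "halve S \<in> sets M" "halve S \<subseteq> S" "measure M (halve S) = measure M S / 2" by auto
qed

text \<open>\<open>dyadic_set n j\<close> plays the role of the event \<open>U \<le> j / 2^n\<close> for the uniform variable \<open>U\<close>
  to be constructed: level \<open>n + 1\<close> keeps the sets of level \<open>n\<close> at even indices and inserts
  half of each gap at odd indices.\<close>
primrec dyadic_set :: "nat \<Rightarrow> nat \<Rightarrow> 'a set" where
  "dyadic_set 0 = (\<lambda>j. if j = 0 then {} else space M)"
| "dyadic_set (Suc n) = (\<lambda>j. if even j then dyadic_set n (j div 2)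
      else dyadic_set n (j div 2) \<union> halve (dyadic_set n (j div 2 + 1) - dyadic_set n (j div 2)))"

lemma dyadic_set_sets: "dyadic_set n j \<in> sets M"
  by (induction n arbitrary: j) (auto simp: halve(1))

lemma dyadic_set_Suc_mono: "dyadic_set n j \<subseteq> dyadic_set n (Suc j)"
proof (induction n arbitrary: j)
  case 0 then show ?case by auto
next
  case (Suc n)
  show ?case
  proof (cases "even j")
    case True
    then have "Suc j div 2 = j div 2" by presburger
    then show ?thesis using True by auto
  next
    case False
    then have "even (Suc j)" "Suc j div 2 = j div 2 + 1" by presburger+
    moreover have "halve (dyadic_set n (j div 2 + 1) - dyadic_set n (j div 2)) \<subseteq> dyadic_set n (j div 2 + 1)"
      using halve(2) dyadic_set_sets by blast
    ultimately show ?thesis using False Suc[of "j div 2"] by auto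
  qed
qed

lemma dyadic_set_mono: "j \<le> k \<Longrightarrow> dyadic_set n j \<subseteq> dyadic_set n k"
  using lift_Suc_mono_le[of "dyadic_set n", OF dyadic_set_Suc_mono] by blast

lemma dyadic_set_top: "2 ^ n \<le> j \<Longrightarrow> dyadic_set n j = space M"
proof (induction n arbitrary: j)
  case 0 then show ?case by auto
next
  case (Suc n)
  have "2 ^ Suc n div 2 \<le> j div 2" by (rule div_le_mono[OF Suc.prems])
  then have j2: "2 ^ n \<le> j div 2" by simp
  have "halve (dyadic_set n (j div 2 + 1) - dyadic_set n (j div 2)) \<subseteq> space M"
    using halve(2) dyadic_set_sets sets.sets_into_space by blast
  then show ?case using Suc.IH[OF j2] by auto
qed

lemma measure_dyadic_set: "j \<le> 2 ^ n \<Longrightarrow> measure M (dyadic_set n j) = real j / 2 ^ n"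
proof (induction n arbitrary: j)
  case 0 then show ?case using prob_space by (cases "j = 0") (auto simp: le_Suc_eq)
next
  case (Suc n)
  show ?case
  proof (cases "even j")
    case True
    then have "j div 2 \<le> 2 ^ n" using Suc.prems by auto
    then show ?thesis using True Suc.IH[of "j div 2"] by (auto elim!: evenE)
  next
    case False
    then obtain i where i: "j = 2 * i + 1" by (auto elim!: oddE)
    have ilt: "i + 1 \<le> 2 ^ n" using Suc.prems i by simp
    define D where "D = dyadic_set n (i + 1) - dyadic_set n i"
    have D: "D \<in> sets M" unfolding D_def using dyadic_set_sets by auto
    have "dyadic_set n i \<subseteq> dyadic_set n (i + 1)" by (rule dyadic_set_mono) simp
    then have measure_D: "measure M D = real (i + 1) / 2 ^ n - real i / 2 ^ n"
      unfolding D_def using dyadic_set_sets Suc.IH[of "i+1"] Suc.IH[of i] ilt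
      by (simp add: finite_measure_Diff)
    have "dyadic_set n i \<inter> halve D = {}" using halve(2)[OF D] unfolding D_def by auto
    then have "measure M (dyadic_set n i \<union> halve D) = measure M (dyadic_set n i) + measure M (halve D)"
      using dyadic_set_sets halve(1)[OF D] by (intro finite_measure_Union) auto
    also have "\<dots> = real j / 2 ^ Suc n"
      using Suc.IH[of i] ilt halve(3)[OF D] measure_D i by (simp add: field_simps)
    finally show ?thesis using False i unfolding D_def by simp
  qed
qed

lemma measure_dyadic_set_le: "measure M (dyadic_set n j) \<le> real j / 2 ^ n"
proof (cases "j \<le> 2 ^ n")
  case True then show ?thesis by (simp add: measure_dyadic_set)
next
  case False
  then have "1 \<le> real j / 2 ^ n" by (simp add: field_simps)
  then show ?thesis using dyadic_set_top[of n j] False prob_space by simp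
qed

lemma dyadic_set_scale: "dyadic_set (n + d) (j * 2 ^ d) = dyadic_set n j"
  by (induction d) simp_all

lemma dyadic_set_dyadic_mono:
  assumes "real j / 2 ^ n \<le> real k / 2 ^ m"
  shows "dyadic_set n j \<subseteq> dyadic_set m k"
proof -
  have "real (j * 2 ^ m) \<le> real (k * 2 ^ n)" using assms by (simp add: field_simps)
  then have le: "j * 2 ^ m \<le> k * 2 ^ n" by (simp only: of_nat_le_iff)
  have "dyadic_set n j = dyadic_set (n + m) (j * 2 ^ m)" by (simp add: dyadic_set_scale)
  also have "\<dots> \<subseteq> dyadic_set (n + m) (k * 2 ^ n)" by (rule dyadic_set_mono[OF le])
  also have "\<dots> = dyadic_set m k" using dyadic_set_scale[of m n k] by (simp add: add.commute)
  finally show ?thesis .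
qed

definition dyadic_uniform :: "'a \<Rightarrow> real" where
  "dyadic_uniform w = Inf {real j / 2 ^ n | n j. w \<in> dyadic_set n j}"

lemma dyadic_uniform_bdd: "bdd_below {real j / 2 ^ n | n j. w \<in> dyadic_set n j}"
  by (rule bdd_belowI[of _ 0]) auto

lemma dyadic_uniform_set_ne: "w \<in> space M \<Longrightarrow> {real j / 2 ^ n | n j. w \<in> dyadic_set n j} \<noteq> {}"
  by (intro ex_in_conv[THEN iffD1] exI[of _ 1] CollectI exI[of _ 0]) simp

lemma dyadic_uniform_le: "w \<in> dyadic_set n j \<Longrightarrow> dyadic_uniform w \<le> real j / 2 ^ n"
  unfolding dyadic_uniform_def by (rule cInf_lower[OF _ dyadic_uniform_bdd]) blast

lemma dyadic_uniform_nonneg: "w \<in> space M \<Longrightarrow> 0 \<le> dyadic_uniform w"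
  unfolding dyadic_uniform_def by (rule cInf_greatest[OF dyadic_uniform_set_ne]) auto

lemma dyadic_uniform_le_1: "w \<in> space M \<Longrightarrow> dyadic_uniform w \<le> 1"
  using dyadic_uniform_le[of w 0 1] by simp

lemma dyadic_uniform_le_iff:
  assumes w: "w \<in> space M"
  shows "dyadic_uniform w \<le> u \<longleftrightarrow> (\<forall>m k. u < real k / 2 ^ m \<longrightarrow> w \<in> dyadic_set m k)"
proof
  assume le: "dyadic_uniform w \<le> u"
  show "\<forall>m k. u < real k / 2 ^ m \<longrightarrow> w \<in> dyadic_set m k"
  proof (intro allI impI)
    fix m k assume "u < real k / 2 ^ m"
    then have "dyadic_uniform w < real k / 2 ^ m" using le by simp
    then obtain n j where "w \<in> dyadic_set n j" "real j / 2 ^ n < real k / 2 ^ m"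
      unfolding dyadic_uniform_def using cInf_less_iff[OF dyadic_uniform_set_ne[OF w] dyadic_uniform_bdd]
      by auto
    then show "w \<in> dyadic_set m k" using dyadic_set_dyadic_mono[of j n k m] by auto
  qed
next
  assume H: "\<forall>m k. u < real k / 2 ^ m \<longrightarrow> w \<in> dyadic_set m k"
  show "dyadic_uniform w \<le> u"
  proof (rule ccontr)
    assume "\<not> dyadic_uniform w \<le> u"
    then have lt: "u < dyadic_uniform w" by simp
    show False
    proof (cases "u < 0")
      case True
      then show False using H[rule_format, of 0 0] by simp
    next
      case False
      obtain m where "1 / (dyadic_uniform w - u) < 2 ^ m"
        using real_arch_pow[of 2 "1 / (dyadic_uniform w - u)"] by auto
      then have m: "1 / 2 ^ m < dyadic_uniform w - u" using lt by (simp add: field_simps)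
      define k where "k = nat \<lfloor>u * 2 ^ m\<rfloor> + 1"
      have k: "real k = real_of_int \<lfloor>u * 2 ^ m\<rfloor> + 1" unfolding k_def using False by simp
      have "u < real k / 2 ^ m" "real k / 2 ^ m \<le> u + 1 / 2 ^ m"
        using k by (simp_all add: field_simps) linarith+
      then show False using dyadic_uniform_le[of w m k] H m by auto
    qed
  qed
qed

lemma dyadic_uniform_measurable[measurable]: "dyadic_uniform \<in> borel_measurable M"
proof (unfold borel_measurable_iff_le, intro allI)
  fix u :: real
  obtain k :: nat where k: "u < real k" using reals_Archimedean2 by blast
  have "{w \<in> space M. dyadic_uniform w \<le> u} =
      space M \<inter> (\<Inter>p\<in>{p. u < real (snd p) / 2 ^ fst p}. dyadic_set (fst p) (snd p))"
    using dyadic_uniform_le_iff by auto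
  moreover have "(\<Inter>p\<in>{p. u < real (snd p) / 2 ^ fst p}. dyadic_set (fst p) (snd p)) \<in> sets M"
  proof (rule sets.countable_INT)
    show "{p. u < real (snd p) / 2 ^ fst p} \<noteq> {}"
      using k by (intro ex_in_conv[THEN iffD1] exI[of _ "(0, k)"]) simp
  qed (auto simp: dyadic_set_sets)
  ultimately show "{w \<in> space M. dyadic_uniform w \<le> u} \<in> sets M" by auto
qed

lemma dyadic_uniform_cdf_approx:
  assumes u: "0 \<le> u" "u \<le> 1"
  shows "\<bar>measure M {w \<in> space M. dyadic_uniform w \<le> u} - u\<bar> \<le> 1 / 2 ^ m"
proof -
  let ?P = "measure M {w \<in> space M. dyadic_uniform w \<le> u}"
  define j where "j = nat \<lfloor>u * 2 ^ m\<rfloor>"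
  have "real j = real_of_int \<lfloor>u * 2 ^ m\<rfloor>" unfolding j_def using u by simp
  then have j: "real j \<le> u * 2 ^ m" "u * 2 ^ m < real j + 1" by linarith+
  have "(u * 2 ^ m - 1) / 2 ^ m < real j / 2 ^ m"
    using j(2) by (intro divide_strict_right_mono) auto
  then have ju: "real j / 2 ^ m \<le> u" "u < real (j + 1) / 2 ^ m" "u - 1 / 2 ^ m < real j / 2 ^ m"
    using j by (simp_all add: pos_divide_le_eq pos_less_divide_eq diff_divide_distrib)
  have "u * 2 ^ m \<le> 2 ^ m" using u by simp
  then have "real j \<le> 2 ^ m" using j(1) by linarith
  then have j2: "j \<le> 2 ^ m" by (metis of_nat_le_iff of_nat_numeral of_nat_power)
  have "dyadic_set m j \<subseteq> {w \<in> space M. dyadic_uniform w \<le> u}"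
    using dyadic_uniform_le[of _ m j] ju dyadic_set_sets[of m j] sets.sets_into_space by fastforce
  moreover have "{w \<in> space M. dyadic_uniform w \<le> u} \<in> sets M" by measurable
  ultimately have lo: "real j / 2 ^ m \<le> ?P"
    using finite_measure_mono measure_dyadic_set[OF j2] by metis
  have "{w \<in> space M. dyadic_uniform w \<le> u} \<subseteq> dyadic_set m (j + 1)"
  proof
    fix w assume "w \<in> {w \<in> space M. dyadic_uniform w \<le> u}"
    then show "w \<in> dyadic_set m (j + 1)" using dyadic_uniform_le_iff[of w u] ju(2) by blast
  qed
  then have "?P \<le> measure M (dyadic_set m (j + 1))"
    using finite_measure_mono[OF _ dyadic_set_sets] by blast
  then have "?P \<le> real (j + 1) / 2 ^ m"
    using measure_dyadic_set_le[of m "j + 1"] by linarith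
  then show ?thesis using lo ju by (simp add: abs_le_iff add_divide_distrib)
qed

lemma dyadic_uniform_cdf: "measure M {w \<in> space M. dyadic_uniform w \<le> u} = max 0 (min 1 u)"
proof -
  let ?P = "measure M {w \<in> space M. dyadic_uniform w \<le> u}"
  consider "u < 0" | "0 \<le> u" "u \<le> 1" | "1 < u" by linarith
  then show ?thesis
  proof cases
    case 1
    then have e: "{w \<in> space M. dyadic_uniform w \<le> u} = {}" using dyadic_uniform_nonneg by force
    show ?thesis unfolding e using 1 by simp
  next
    case 3
    then have e: "{w \<in> space M. dyadic_uniform w \<le> u} = space M" using dyadic_uniform_le_1 by force
    show ?thesis unfolding e using 3 by (simp add: prob_space)
  next
    case 2
    have "?P = u"
    proof (rule ccontr)
      assume "?P \<noteq> u"
      then obtain m where "1 / \<bar>?P - u\<bar> < 2 ^ m" "0 < \<bar>?P - u\<bar>"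
        using real_arch_pow[of 2 "1 / \<bar>?P - u\<bar>"] by auto
      then have "1 / 2 ^ m < \<bar>?P - u\<bar>" by (simp add: field_simps)
      then show False using dyadic_uniform_cdf_approx[OF 2, of m] by simp
    qed
    then show ?thesis using 2 by simp
  qed
qed

lemma distr_dyadic_uniform: "distr M borel dyadic_uniform = unit_uniform"
proof (rule eq_unit_uniformI)
  show "real_distribution (distr M borel dyadic_uniform)" by (rule real_distribution_distr) simp
  fix u :: real
  have "measure (distr M borel dyadic_uniform) {..u} = measure M (dyadic_uniform -` {..u} \<inter> space M)"
    by (rule measure_distr) auto
  also have "dyadic_uniform -` {..u} \<inter> space M = {w \<in> space M. dyadic_uniform w \<le> u}" by auto
  finally show "measure (distr M borel dyadic_uniform) {..u} = max 0 (min 1 u)"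
    by (simp add: dyadic_uniform_cdf)
qed

end

lemma atomless_ex_uniform:
  assumes "prob_space M" "atomless M"
  obtains U where "U \<in> borel_measurable M" "distr M borel U = unit_uniform"
proof -
  interpret atomless_prob_space M
    using assms by (intro atomless_prob_space.intro atomless_prob_space_axioms.intro)
  show ?thesis using that dyadic_uniform_measurable distr_dyadic_uniform by blast
qed

section \<open>Quantile functions, tail integrals and expected shortfall\<close>

lemma set_integrable_const_Ioo01:
  fixes S :: "real set"
  assumes "S \<in> sets borel" "S \<subseteq> {0<..<1}"
  shows "set_integrable lborel S (\<lambda>_. c :: real)"
proof -
  have "integrable lborel (indicat_real {0<..<1::real})" by (rule integrable_real_indicator) auto
  then have "set_integrable lborel {0<..<1::real} (\<lambda>_. c)" by (simp add: set_integrable_def)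
  then show ?thesis by (rule set_integrable_subset) (use assms in auto)
qed

lemma set_integral_const_Ioo01:
  fixes S :: "real set"
  assumes "S \<in> sets borel" "S \<subseteq> {0<..<1}"
  shows "(LINT v:S|lborel. c) = measure lborel S * c"
proof -
  have "emeasure lborel S \<le> emeasure lborel {0<..<1::real}"
    using assms by (intro emeasure_mono) auto
  then have "emeasure lborel S \<noteq> \<infinity>"
    by (metis emeasure_lborel_Ioo ennreal_neq_top neq_top_trans zero_le_one infinity_ennreal_def)
  then show ?thesis using assms by (simp add: set_integral_const)
qed

locale real_rv = prob_space +
  fixes X :: "'a \<Rightarrow> real"
  assumes X_measurable[measurable]: "X \<in> borel_measurable M"
begin

lemma cdf_rv_eq_cdf: "cdf_rv M X = cdf (distr M borel X)"
  by (auto simp: fun_eq_iff cdf_rv_def cdf_def measure_distr intro!: arg_cong[where f="measure M"])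

lemma cdf_rv_mono: "x \<le> y \<Longrightarrow> cdf_rv M X x \<le> cdf_rv M X y"
  unfolding cdf_rv_def by (intro finite_measure_mono) auto

definition quantile :: "real \<Rightarrow> real" where
  "quantile b = Inf {x. b \<le> cdf_rv M X x}"

lemma quantile_le_iff:
  assumes "0 < b" "b < 1"
  shows "quantile b \<le> x \<longleftrightarrow> b \<le> cdf_rv M X x"
proof -
  interpret law: cdf_distribution "distr M borel X"
    by (simp add: cdf_distribution_def real_distribution_distr)
  have "b \<le> cdf (distr M borel X) x \<longleftrightarrow> Inf {x. b \<le> cdf (distr M borel X) x} \<le> x"
    by (rule law.pseudoinverse[OF assms])
  then show ?thesis unfolding quantile_def cdf_rv_eq_cdf by (rule sym)
qed

lemma le_cdf_quantile: "0 < b \<Longrightarrow> b < 1 \<Longrightarrow> b \<le> cdf_rv M X (quantile b)"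
  using quantile_le_iff[of b "quantile b"] by simp

lemma quantile_mono: "0 < b \<Longrightarrow> b \<le> b' \<Longrightarrow> b' < 1 \<Longrightarrow> quantile b \<le> quantile b'"
  using quantile_le_iff[of b "quantile b'"] quantile_le_iff[of b' "quantile b'"] by simp

lemma VaR_eq_quantile: "0 < b \<Longrightarrow> b < 1 \<Longrightarrow> VaR M b X = ereal (quantile b)"
proof -
  assume b: "0 < b" "b < 1"
  then have "{x. b \<le> cdf_rv M X x} = {quantile b..}" using quantile_le_iff by auto
  then show ?thesis unfolding VaR_def by (auto intro!: antisym Inf_lower Inf_greatest)
qed

lemma VaR_plus_le_quantile: "0 \<le> b \<Longrightarrow> b < v \<Longrightarrow> v < 1 \<Longrightarrow> VaR_plus M b X \<le> ereal (quantile v)"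
  unfolding VaR_plus_def using le_cdf_quantile[of v] by (intro Inf_lower) force

lemma quantile_ge_essential_lower_bound:
  assumes c: "AE \<omega> in M. c \<le> X \<omega>" and v: "0 < v" "v < 1"
  shows "c \<le> quantile v"
proof (rule ccontr)
  assume "\<not> c \<le> quantile v"
  then have lt: "quantile v < c" by simp
  have "AE \<omega> in M. \<not> X \<omega> \<le> quantile v" using c by eventually_elim (use lt in auto)
  then have "cdf_rv M X (quantile v) = 0" unfolding cdf_rv_def by (rule prob_eq_0_AE)
  then show False using le_cdf_quantile[OF v] v by simp
qed

text \<open>The value \<open>c\<close> on the null set outside \<open>{0<..<1}\<close> is arbitrary; taking it below the
  quantiles keeps the transform monotone on \<open>[a, 1)\<close> even for \<open>a = 0\<close>.\<close>
definition quantile_transform :: "real \<Rightarrow> real \<Rightarrow> real" where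
  "quantile_transform c v = (if v \<in> {0<..<1} then quantile v else c)"

lemma quantile_transform_le_iff:
  "{v. quantile_transform c v \<le> x} = ({0<..<1} \<inter> {..cdf_rv M X x}) \<union> (if c \<le> x then - {0<..<1} else {})"
  unfolding quantile_transform_def using quantile_le_iff by auto

lemma quantile_transform_measurable[measurable]: "quantile_transform c \<in> borel_measurable borel"
  unfolding borel_measurable_iff_le by (simp add: quantile_transform_le_iff)

lemma distr_quantile_transform: "distr unit_uniform borel (quantile_transform c) = distr M borel X"
proof (rule cdf_unique)
  show "real_distribution (distr unit_uniform borel (quantile_transform c))"
    using prob_space.real_distribution_distr[OF prob_space_unit_uniform] by simp
  have "measure unit_uniform {v. quantile_transform c v \<le> x} = cdf_rv M X x" for x
  proof -
    have "measure unit_uniform {v. quantile_transform c v \<le> x}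
        = measure lborel ({0<..<1} \<inter> {v. quantile_transform c v \<le> x})"
      by (rule measure_unit_uniform) measurable
    also have "{0<..<1} \<inter> {v. quantile_transform c v \<le> x} = {0<..<1} \<inter> {..cdf_rv M X x}"
      unfolding quantile_transform_le_iff by auto
    also have "measure lborel \<dots> = cdf_rv M X x"
      unfolding measure_Ioo01_atMost by (simp add: cdf_rv_def)
    finally show ?thesis .
  qed
  then show "cdf (distr unit_uniform borel (quantile_transform c)) = cdf (distr M borel X)"
    by (auto simp: fun_eq_iff cdf_def measure_distr vimage_def cdf_rv_eq_cdf)
qed simp

lemma
  fixes g :: "real \<Rightarrow> real"
  assumes [measurable]: "g \<in> borel_measurable borel"
  shows integrable_quantile: "integrable M (\<lambda>w. g (X w)) \<longleftrightarrow> set_integrable lborel {0<..<1} (\<lambda>v. g (quantile v))"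
    and integral_quantile: "(\<integral>w. g (X w) \<partial>M) = (LINT v:{0<..<1}|lborel. g (quantile v))"
proof -
  let ?Q = "quantile_transform 0"
  have "integrable M (\<lambda>w. g (X w)) \<longleftrightarrow> integrable (distr unit_uniform borel ?Q) g"
    by (simp add: distr_quantile_transform integrable_distr_eq)
  also have "\<dots> \<longleftrightarrow> set_integrable lborel {0<..<1} (\<lambda>v. g (?Q v))"
    by (simp add: integrable_distr_eq integrable_unit_uniform)
  also have "\<dots> \<longleftrightarrow> set_integrable lborel {0<..<1} (\<lambda>v. g (quantile v))"
    unfolding set_integrable_def
    by (intro Bochner_Integration.integrable_cong) (auto simp: quantile_transform_def indicator_def)
  finally show "integrable M (\<lambda>w. g (X w)) \<longleftrightarrow> set_integrable lborel {0<..<1} (\<lambda>v. g (quantile v))" .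
  have "(\<integral>w. g (X w) \<partial>M) = integral\<^sup>L (distr unit_uniform borel ?Q) g"
    by (simp add: distr_quantile_transform integral_distr)
  also have "\<dots> = (LINT v:{0<..<1}|lborel. g (?Q v))"
    by (simp add: integral_distr integral_unit_uniform)
  also have "\<dots> = (LINT v:{0<..<1}|lborel. g (quantile v))"
    by (rule set_lebesgue_integral_cong) (auto simp: quantile_transform_def)
  finally show "(\<integral>w. g (X w) \<partial>M) = (LINT v:{0<..<1}|lborel. g (quantile v))" .
qed

lemma ES_eq_quantile_integral:
  assumes "0 \<le> a" "a < 1"
  shows "ES M a X = ereal ((LINT v:{a<..<1}|lborel. quantile v) / (1 - a))"
proof -
  have "(LINT v:{a<..<1}|lborel. real_of_ereal (VaR M v X)) = (LINT v:{a<..<1}|lborel. quantile v)"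
    by (rule set_lebesgue_integral_cong) (use assms VaR_eq_quantile in auto)
  then show ?thesis unfolding ES_def using assms by simp
qed

end

locale tail_integral =
  fixes q :: "real \<Rightarrow> real"
  assumes mono_q: "\<And>x y. 0 < x \<Longrightarrow> x \<le> y \<Longrightarrow> y < 1 \<Longrightarrow> q x \<le> q y"
    and integrable_q: "set_integrable lborel {0<..<1} q"
begin

definition tail :: "real \<Rightarrow> real" where
  "tail a = (LINT v:{a<..<1}|lborel. q v)"

lemma set_integrable_q: "S \<in> sets borel \<Longrightarrow> S \<subseteq> {0<..<1} \<Longrightarrow> set_integrable lborel S q"
  by (rule set_integrable_subset[OF integrable_q]) auto

lemma set_integral_le_const:
  assumes "S \<in> sets borel" "S \<subseteq> {0<..<1}" "\<And>v. v \<in> S \<Longrightarrow> q v \<le> r"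
  shows "(LINT v:S|lborel. q v) \<le> measure lborel S * r"
proof -
  have "(LINT v:S|lborel. q v) \<le> (LINT v:S|lborel. r)"
    using assms by (intro set_integral_mono set_integrable_q set_integrable_const_Ioo01)
  also have "\<dots> = measure lborel S * r"
    using assms(1,2) by (rule set_integral_const_Ioo01)
  finally show ?thesis .
qed

lemma set_integral_ge_const:
  assumes "S \<in> sets borel" "S \<subseteq> {0<..<1}" "\<And>v. v \<in> S \<Longrightarrow> r \<le> q v"
  shows "measure lborel S * r \<le> (LINT v:S|lborel. q v)"
proof -
  have "measure lborel S * r = (LINT v:S|lborel. r)"
    using assms by (simp add: set_integral_const_Ioo01)
  also have "\<dots> \<le> (LINT v:S|lborel. q v)"
    using assms by (intro set_integral_mono set_integrable_q set_integrable_const_Ioo01)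
  finally show ?thesis .
qed

lemma tail_split:
  assumes "0 \<le> a" "a \<le> b" "b < 1"
  shows "tail a = (LINT v:{a<..b}|lborel. q v) + tail b"
proof -
  have "{a<..<1} = {a<..b} \<union> {b<..<1}" using assms by auto
  then show ?thesis
    unfolding tail_def by (simp only:) (rule set_integral_Un, use assms in \<open>auto intro!: set_integrable_q\<close>)
qed

lemma quantile_le_tail_avg:
  assumes "0 < a" "a < 1"
  shows "q a \<le> tail a / (1 - a)"
proof -
  have "measure lborel {a<..<1} * q a \<le> tail a"
    unfolding tail_def using assms mono_q by (intro set_integral_ge_const) auto
  then show ?thesis using assms by (simp add: pos_le_divide_eq mult.commute)
qed

lemma tail_avg_mono:
  assumes "0 \<le> a" "a \<le> b" "b < 1"
  shows "tail a / (1 - a) \<le> tail b / (1 - b)"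
proof (cases "a = b")
  case False
  then have ab: "a < b" "0 < b" using assms by auto
  have "(LINT v:{a<..b}|lborel. q v) \<le> measure lborel {a<..b} * q b"
    using assms ab mono_q by (intro set_integral_le_const) auto
  then have "tail a \<le> (b - a) * q b + tail b"
    using tail_split[OF assms] assms by simp
  also have "\<dots> \<le> (b - a) * (tail b / (1 - b)) + tail b"
    using quantile_le_tail_avg[of b] ab assms by (intro add_right_mono mult_left_mono) auto
  also have "\<dots> = (1 - a) * (tail b / (1 - b))"
    using assms by (simp add: field_simps)
  finally show ?thesis using assms ab by (simp add: pos_divide_le_eq mult.commute)
qed simp

text \<open>Near \<open>a\<close> the tail average is bounded below by a function continuous in the level, since
  \<open>q \<ge> q (a/2)\<close> on \<open>[a/2, a]\<close>.\<close>
lemma tail_avg_left: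
  assumes a: "0 < a" "a < 1" and t: "t < tail a / (1 - a)"
  shows "\<exists>a'. 0 < a' \<and> a' < a \<and> t < tail a' / (1 - a')"
proof -
  define g where "g a' = ((a - a') * q (a / 2) + tail a) / (1 - a')" for a'
  have "(g \<longlongrightarrow> g a) (at_left a)"
    unfolding g_def using a by (intro tendsto_intros) auto
  moreover have "t < g a" using t by (simp add: g_def)
  ultimately have "eventually (\<lambda>a'. t < g a') (at_left a)"
    by (rule order_tendstoD(1))
  moreover have "eventually (\<lambda>a'. a' \<in> {a / 2<..<a}) (at_left a)"
    using a by (intro eventually_at_left_real) auto
  ultimately have "eventually (\<lambda>a'. t < g a' \<and> a' \<in> {a / 2<..<a}) (at_left a)"
    by (rule eventually_conj)
  then obtain a' where a': "t < g a'" "a / 2 < a'" "a' < a"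
    using eventually_happens'[OF trivial_limit_at_left_real] by auto
  have "measure lborel {a'<..a} * q (a / 2) \<le> (LINT v:{a'<..a}|lborel. q v)"
    using a a' mono_q by (intro set_integral_ge_const) auto
  then have "g a' \<le> tail a' / (1 - a')"
    unfolding g_def using tail_split[of a' a] a a' by (simp add: divide_right_mono)
  then show ?thesis using a a' by (intro exI[of _ a']) auto
qed

lemma set_integrable_excess:
  assumes "S \<in> sets borel" "S \<subseteq> {0<..<1}"
  shows "set_integrable lborel S (\<lambda>v. max 0 (q v - t))"
proof -
  have "set_integrable lborel S (\<lambda>v. q v - t)"
    using assms by (intro set_integral_diff(1) set_integrable_q set_integrable_const_Ioo01)
  then have "set_integrable lborel S (\<lambda>v. ((q v - t) + \<bar>q v - t\<bar>) / 2)"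
    by (intro set_integrable_divide set_integral_add(1) set_integrable_abs)
  moreover have "(\<lambda>v. ((q v - t) + \<bar>q v - t\<bar>) / 2) = (\<lambda>v. max 0 (q v - t))"
    by (auto simp: fun_eq_iff max_def)
  ultimately show ?thesis by simp
qed

text \<open>Rockafellar--Uryasev: for \<open>a > 0\<close> the bound is attained at \<open>t = q a\<close> (\<open>tail_eq_excess\<close>).\<close>
lemma tail_le_excess:
  assumes "0 \<le> a" "a < 1"
  shows "tail a \<le> (1 - a) * t + (LINT v:{0<..<1}|lborel. max 0 (q v - t))"
proof -
  have ia: "set_integrable lborel {a<..<1} q" using assms by (intro set_integrable_q) auto
  have ic: "set_integrable lborel {a<..<1} (\<lambda>_. t)" using assms by (intro set_integrable_const_Ioo01) auto
  have "tail a = (LINT v:{a<..<1}|lborel. q v - t) + (LINT v:{a<..<1}|lborel. t)"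
    unfolding tail_def using ia ic by simp
  also have "(LINT v:{a<..<1}|lborel. t) = (1 - a) * t"
    using assms by (subst set_integral_const_Ioo01) auto
  also have "(LINT v:{a<..<1}|lborel. q v - t) \<le> (LINT v:{a<..<1}|lborel. max 0 (q v - t))"
    using assms ia ic by (intro set_integral_mono set_integrable_excess) auto
  also have "\<dots> \<le> (LINT v:{0<..<1}|lborel. max 0 (q v - t))"
    unfolding set_lebesgue_integral_def
  proof (rule integral_mono)
    have "set_integrable lborel {a<..<1} (\<lambda>v. max 0 (q v - t))"
      using assms by (intro set_integrable_excess) auto
    then show "integrable lborel (\<lambda>x. indicat_real {a<..<1} x *\<^sub>R max 0 (q x - t))"
      unfolding set_integrable_def .
    show "integrable lborel (\<lambda>x. indicat_real {0<..<1} x *\<^sub>R max 0 (q x - t))"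
      using set_integrable_excess[of "{0<..<1}"] unfolding set_integrable_def by simp
  qed (use assms in \<open>auto simp: indicator_def\<close>)
  finally show ?thesis by simp
qed

lemma tail_eq_excess:
  assumes a: "0 < a" "a < 1"
  shows "tail a = (1 - a) * q a + (LINT v:{0<..<1}|lborel. max 0 (q v - q a))"
proof -
  let ?f = "\<lambda>v. max 0 (q v - q a)"
  have "{0<..<1} = {0<..a} \<union> {a<..<1::real}" using a by auto
  then have "(LINT v:{0<..<1}|lborel. ?f v) = (LINT v:{0<..a}|lborel. ?f v) + (LINT v:{a<..<1}|lborel. ?f v)"
    by (simp only:) (rule set_integral_Un, use a in \<open>auto intro!: set_integrable_excess\<close>)
  also have "(LINT v:{0<..a}|lborel. ?f v) = 0"
    using a mono_q by (subst set_lebesgue_integral_cong[where g="\<lambda>_. 0"]) auto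
  also have "(LINT v:{a<..<1}|lborel. ?f v) = (LINT v:{a<..<1}|lborel. q v - q a)"
    using a mono_q by (intro set_lebesgue_integral_cong) auto
  also have "\<dots> = tail a - (LINT v:{a<..<1}|lborel. q a)"
    unfolding tail_def using a
    by (intro set_integral_diff(2) set_integrable_q set_integrable_const_Ioo01) auto
  also have "(LINT v:{a<..<1}|lborel. q a) = (1 - a) * q a"
    using a by (subst set_integral_const_Ioo01) auto
  finally show ?thesis by simp
qed

lemma set_integral_le_riemann_sum:
  assumes a: "0 \<le> a" and h: "0 < h" and m: "a + real m * h < 1"
  shows "(LINT v:{a<..a + real m * h}|lborel. q v) \<le> h * (\<Sum>j\<in>{1..m}. q (a + real j * h))"
  using m
proof (induction m)
  case 0 then show ?case by (simp add: set_lebesgue_integral_def)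
next
  case (Suc m)
  let ?x = "a + real m * h" and ?y = "a + real (Suc m) * h"
  have le: "a \<le> ?x" "?x \<le> ?y" using h by auto
  then have x: "0 \<le> ?x" "?x < 1" using a Suc.prems by linarith+
  have "{a<..?y} = {a<..?x} \<union> {?x<..?y}" using le by auto
  then have "(LINT v:{a<..?y}|lborel. q v) = (LINT v:{a<..?x}|lborel. q v) + (LINT v:{?x<..?y}|lborel. q v)"
    by (simp only:) (rule set_integral_Un, use le x Suc.prems a in \<open>auto intro!: set_integrable_q\<close>)
  also have "(LINT v:{?x<..?y}|lborel. q v) \<le> measure lborel {?x<..?y} * q ?y"
    using le x Suc.prems by (intro set_integral_le_const) (auto intro!: mono_q)
  also have "measure lborel {?x<..?y} = h" using le by (simp add: algebra_simps)
  finally show ?case using Suc h by (simp add: algebra_simps)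
qed

lemma tail_truncated_limit:
  assumes a: "0 \<le> a" "a < 1"
  shows "(\<lambda>i. LINT v:{a<..1 - (1 - a) / real (Suc i)}|lborel. q v) \<longlonglongrightarrow> tail a"
proof -
  define A where "A i = {a<..1 - (1 - a) / real (Suc i)}" for i
  have "incseq A"
  proof (rule incseq_SucI, rule subsetI)
    fix i x assume "x \<in> A i"
    moreover have "(1 - a) / real (Suc (Suc i)) \<le> (1 - a) / real (Suc i)"
      using a by (intro divide_left_mono) auto
    ultimately show "x \<in> A (Suc i)" unfolding A_def by auto
  qed
  have "(\<Union>i. A i) = {a<..<1}"
  proof (intro equalityI subsetI)
    fix x assume x: "x \<in> {a<..<1}"
    obtain k where "(1 - a) / (1 - x) < real (Suc k)"
      using reals_Archimedean2 less_Suc_eq of_nat_less_iff by (metis order.strict_trans)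
    then have "(1 - a) / real (Suc k) < 1 - x" using x by (simp add: field_simps)
    then have "x \<in> A k" using x unfolding A_def by auto
    then show "x \<in> (\<Union>i. A i)" by blast
  next
    fix x assume "x \<in> (\<Union>i. A i)"
    then obtain i where "x \<in> A i" by blast
    moreover have "0 < (1 - a) / real (Suc i)" using a by simp
    ultimately show "x \<in> {a<..<1}" unfolding A_def by auto
  qed
  moreover have "(\<lambda>i. LINT v:A i|lborel. q v) \<longlonglongrightarrow> (LINT v:(\<Union>i. A i)|lborel. q v)"
  proof (rule set_integral_cont_up[OF _ \<open>incseq A\<close>])
    show "A i \<in> sets lborel" for i unfolding A_def by simp
    show "set_integrable lborel (\<Union>i. A i) q"
      unfolding \<open>(\<Union>i. A i) = {a<..<1}\<close> using a by (intro set_integrable_q) auto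
  qed
  ultimately show ?thesis unfolding A_def tail_def by simp
qed

end

locale integrable_rv = real_rv +
  assumes X_integrable: "integrable M X"
begin

sublocale tail_integral quantile
  using integrable_quantile[of "\<lambda>x. x"] X_integrable by unfold_locales (auto intro: quantile_mono)

lemma ES_eq_tail: "0 \<le> a \<Longrightarrow> a < 1 \<Longrightarrow> ES M a X = ereal (tail a / (1 - a))"
  by (simp add: ES_eq_quantile_integral tail_def)

lemma expectation_excess: "(\<integral>w. max 0 (X w - t) \<partial>M) = (LINT v:{0<..<1}|lborel. max 0 (quantile v - t))"
  using integral_quantile[of "\<lambda>x. max 0 (x - t)"] by simp

lemma ES_ge_VaR: assumes "0 < a" "a \<le> 1" shows "VaR M a X \<le> ES M a X"
proof (cases "a = 1")
  case False
  then show ?thesis using assms quantile_le_tail_avg[of a] by (simp add: VaR_eq_quantile ES_eq_tail)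
qed (simp add: ES_def)

lemma ES_ge_VaR_plus: assumes a: "0 \<le> a" "a < 1" shows "VaR_plus M a X \<le> ES M a X"
proof -
  have le: "VaR_plus M a X \<le> ereal (quantile v)" if "a < v" "v < 1" for v
    using a that by (intro VaR_plus_le_quantile) auto
  show ?thesis
  proof (cases "VaR_plus M a X")
    case (real r)
    have "measure lborel {a<..<1} * r \<le> tail a"
      unfolding tail_def using a le real by (intro set_integral_ge_const) auto
    then show ?thesis using real a by (simp add: ES_eq_tail pos_le_divide_eq mult.commute)
  next
    case PInf
    obtain v where "a < v" "v < 1" using a dense by blast
    then show ?thesis using le PInf by fastforce
  qed simp
qed

lemma ES_le_VaR_1: assumes a: "0 \<le> a" "a < 1" shows "ES M a X \<le> VaR M 1 X"
  unfolding VaR_def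
proof (rule Inf_greatest)
  fix z assume "z \<in> ereal ` {x. 1 \<le> cdf_rv M X x}"
  then obtain x where x: "z = ereal x" "1 \<le> cdf_rv M X x" by auto
  have "tail a \<le> measure lborel {a<..<1} * x"
    unfolding tail_def using a x quantile_le_iff by (intro set_integral_le_const) auto
  then show "ES M a X \<le> z" using x a by (simp add: ES_eq_tail pos_divide_le_eq mult.commute)
qed

lemma ES_mono: assumes "0 \<le> a" "a \<le> b" "b \<le> 1" shows "ES M a X \<le> ES M b X"
proof (cases "b = 1")
  case True
  then show ?thesis
    using ES_le_VaR_1[of a] assms by (cases "a = 1") (simp_all add: ES_def[of M 1])
next
  case False
  then show ?thesis using tail_avg_mono[of a b] assms by (simp add: ES_eq_tail)
qed

end

lemma integrable_rvI: "prob_space M \<Longrightarrow> integrable M X \<Longrightarrow> integrable_rv M X"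
  by (simp add: integrable_rv_def integrable_rv_axioms_def real_rv_def real_rv_axioms_def)

section \<open>Averaging rearrangements\<close>

definition convex_rv_set :: "('a \<Rightarrow> real) set \<Rightarrow> bool" where
  "convex_rv_set D \<longleftrightarrow> (\<forall>X\<in>D. \<forall>Y\<in>D. \<forall>\<gamma>\<in>{0..1::real}. (\<lambda>\<omega>. \<gamma> * X \<omega> + (1 - \<gamma>) * Y \<omega>) \<in> D)"

definition law_closed :: "'a measure \<Rightarrow> ('a \<Rightarrow> real) set \<Rightarrow> bool" where
  "law_closed M D \<longleftrightarrow>
     (\<forall>X\<in>D. \<forall>Y\<in>borel_measurable M. distr M borel Y = distr M borel X \<longrightarrow> Y \<in> D)"

lemma law_closed_law_invariant_eq:
  assumes "law_closed M D" "law_invariant_on M D \<rho>" "X \<in> D"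
    and "Z \<in> borel_measurable M" "distr M borel Z = distr M borel X"
  shows "Z \<in> D" "\<rho> Z = \<rho> X"
  using assms unfolding law_closed_def law_invariant_on_def by blast+

lemma quasi_convex_on_average:
  assumes qc: "quasi_convex_on D \<rho>" and D: "convex_rv_set D"
    and Z: "\<And>j. j < n \<Longrightarrow> Z j \<in> D" "\<And>j. j < n \<Longrightarrow> \<rho> (Z j) \<le> c" and n: "0 < n"
  shows "(\<lambda>\<omega>. (1 / real n) * (\<Sum>j<n. Z j \<omega>)) \<in> D \<and> \<rho> (\<lambda>\<omega>. (1 / real n) * (\<Sum>j<n. Z j \<omega>)) \<le> c"
proof -
  have "(\<lambda>\<omega>. (1 / real (Suc m)) * (\<Sum>j<Suc m. Z j \<omega>)) \<in> D
      \<and> \<rho> (\<lambda>\<omega>. (1 / real (Suc m)) * (\<Sum>j<Suc m. Z j \<omega>)) \<le> c" if "Suc m \<le> n" for m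
    using that
  proof (induction m)
    case 0 then show ?case using Z[of 0] by simp
  next
    case (Suc m)
    define S where "S = (\<lambda>\<omega>. (1 / real (Suc m)) * (\<Sum>j<Suc m. Z j \<omega>))"
    define \<gamma> where "\<gamma> = real (Suc m) / real (Suc (Suc m))"
    have S: "S \<in> D" "\<rho> S \<le> c" and ZS: "Z (Suc m) \<in> D" "\<rho> (Z (Suc m)) \<le> c"
      using Suc Z unfolding S_def by auto
    have \<gamma>: "\<gamma> \<in> {0..1}" unfolding \<gamma>_def by auto
    have g1: "\<gamma> * (1 / real (Suc m)) = 1 / real (Suc (Suc m))" and g2: "1 - \<gamma> = 1 / real (Suc (Suc m))"
      unfolding \<gamma>_def by (simp_all add: field_simps)
    have avg: "(\<lambda>\<omega>. (1 / real (Suc (Suc m))) * (\<Sum>j<Suc (Suc m). Z j \<omega>))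
        = (\<lambda>\<omega>. \<gamma> * S \<omega> + (1 - \<gamma>) * Z (Suc m) \<omega>)"
    proof
      fix \<omega>
      have "\<gamma> * S \<omega> + (1 - \<gamma>) * Z (Suc m) \<omega>
          = (\<gamma> * (1 / real (Suc m))) * (\<Sum>j<Suc m. Z j \<omega>) + (1 - \<gamma>) * Z (Suc m) \<omega>"
        unfolding S_def by (simp only: mult.assoc)
      also have "\<dots> = (1 / real (Suc (Suc m))) * ((\<Sum>j<Suc m. Z j \<omega>) + Z (Suc m) \<omega>)"
        unfolding g1 g2 by (simp only: distrib_left)
      finally show "(1 / real (Suc (Suc m))) * (\<Sum>j<Suc (Suc m). Z j \<omega>)
          = \<gamma> * S \<omega> + (1 - \<gamma>) * Z (Suc m) \<omega>" by simp
    qed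
    have "\<rho> (\<lambda>\<omega>. \<gamma> * S \<omega> + (1 - \<gamma>) * Z (Suc m) \<omega>) \<le> max (\<rho> S) (\<rho> (Z (Suc m)))"
      using qc S ZS \<gamma> unfolding quasi_convex_on_def by blast
    moreover have "(\<lambda>\<omega>. \<gamma> * S \<omega> + (1 - \<gamma>) * Z (Suc m) \<omega>) \<in> D"
      using D S ZS \<gamma> unfolding convex_rv_set_def by blast
    ultimately show ?case
      unfolding avg using S ZS by (meson max.boundedI order_trans)
  qed
  then show ?thesis using n by (metis Suc_leI Suc_pred' lessI)
qed

text \<open>\<open>cyclic_shift a d\<close> fixes \<open>[0, a)\<close> and rotates \<open>[a, 1)\<close>, viewed as a circle, by \<open>d\<close>.\<close>
definition cyclic_shift :: "real \<Rightarrow> real \<Rightarrow> real \<Rightarrow> real" where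
  "cyclic_shift a d v = (if v < a then v else if v < 1 - d then v + d else v + d - (1 - a))"

lemma cyclic_shift_measurable[measurable]: "cyclic_shift a d \<in> borel_measurable borel"
  unfolding cyclic_shift_def by measurable

lemma measure_Ico_atMost:
  "l \<le> u \<Longrightarrow> measure lborel ({l..<u} \<inter> {..y}) = max 0 (min u y - l)"
proof -
  assume lu: "l \<le> u"
  consider "y < l" | "l \<le> y" "y < u" | "u \<le> y" by linarith
  then show ?thesis
  proof cases
    case 1 then have "{l..<u} \<inter> {..y} = {}" by auto
    then show ?thesis using 1 lu by simp
  next
    case 2 then have "{l..<u} \<inter> {..y} = {l..y}" by auto
    then show ?thesis using 2 lu by simp
  next
    case 3 then have "{l..<u} \<inter> {..y} = {l..<u}" by auto
    then show ?thesis using 3 lu by simp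
  qed
qed

lemma distr_cyclic_shift:
  assumes a: "0 \<le> a" "a < 1" and d: "0 \<le> d" "d < 1 - a"
  shows "distr unit_uniform borel (cyclic_shift a d) = unit_uniform"
proof (rule eq_unit_uniformI)
  show "real_distribution (distr unit_uniform borel (cyclic_shift a d))"
    using prob_space.real_distribution_distr[OF prob_space_unit_uniform] by simp
  fix x :: real
  let ?A = "{0..<a} \<inter> {..x}" and ?B = "{a..<1-d} \<inter> {..x-d}" and ?C = "{1-d..<1} \<inter> {..x-d+(1-a)}"
  have fin: "emeasure lborel S \<noteq> \<infinity>" if "S \<subseteq> {0..1}" for S :: "real set"
    using emeasure_bounded_finite[OF bounded_subset[OF bounded_cbox that[unfolded cbox_interval[symmetric]]]]
    by simp
  have "measure (distr unit_uniform borel (cyclic_shift a d)) {..x}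
      = measure unit_uniform {v. cyclic_shift a d v \<le> x}"
    by (subst measure_distr) (auto simp: vimage_def)
  also have "\<dots> = measure lborel ({0..<1} \<inter> {v. cyclic_shift a d v \<le> x})"
    by (rule measure_unit_uniform_Ico) measurable
  also have "{0..<1} \<inter> {v. cyclic_shift a d v \<le> x} = (?A \<union> ?B) \<union> ?C"
    using a d unfolding cyclic_shift_def by (auto split: if_splits)
  also have "measure lborel ((?A \<union> ?B) \<union> ?C) = measure lborel (?A \<union> ?B) + measure lborel ?C"
    using a d by (intro measure_Union fin) auto
  also have "measure lborel (?A \<union> ?B) = measure lborel ?A + measure lborel ?B"
    using a d by (intro measure_Union fin) auto
  also have "measure lborel ?A + measure lborel ?B + measure lborel ?C
      = max 0 (min a x - 0) + max 0 (min (1 - d) (x - d) - a) + max 0 (min 1 (x - d + (1 - a)) - (1 - d))"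
    using a d by (simp add: measure_Ico_atMost)
  also have "\<dots> = max 0 (min 1 x)"
    using a d by (simp add: max_def min_def)
  finally show "measure (distr unit_uniform borel (cyclic_shift a d)) {..x} = max 0 (min 1 x)" .
qed

lemma sum_mod_shift:
  fixes f :: "nat \<Rightarrow> 'b::comm_monoid_add"
  assumes "k < n"
  shows "(\<Sum>i<n. f ((k + i) mod n)) = (\<Sum>j<n. f j)"
proof -
  have inj: "inj_on (\<lambda>i. (k + i) mod n) {..<n}"
    using assms by (intro inj_onI) (auto simp: mod_if split: if_splits)
  have "(\<lambda>i. (k + i) mod n) ` {..<n} = {..<n}"
    using assms by (intro endo_inj_surj inj) auto
  then show ?thesis using sum.reindex[OF inj, of f] by simp
qed

text \<open>For \<open>v \<in> [a, 1)\<close> the points \<open>cyclic_shift a (j h) v\<close>, \<open>j < n\<close>, \<open>n h = 1 - a\<close>, are the grid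
  \<open>a + j h\<close> translated by less than \<open>h\<close> and relabelled cyclically; so for \<open>R\<close> monotone on
  \<open>[a, 1)\<close> their sum dominates the left Riemann sum.\<close>
lemma left_riemann_sum_le_cyclic_shift_sum:
  fixes R :: "real \<Rightarrow> real"
  assumes a: "0 \<le> a" "a < 1" and n: "0 < n" and v: "a \<le> v" "v < 1"
    and R: "\<And>x y. a \<le> x \<Longrightarrow> x \<le> y \<Longrightarrow> y < 1 \<Longrightarrow> R x \<le> R y"
  defines "h \<equiv> (1 - a) / real n"
  shows "(\<Sum>j<n. R (a + real j * h)) \<le> (\<Sum>i<n. R (cyclic_shift a (real i * h) v))"
proof -
  have h: "0 < h" "real n * h = 1 - a" unfolding h_def using a n by auto
  define s where "s = (v - a) / h"
  have s: "0 \<le> s" "s < real n" "v = a + s * h"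
    unfolding s_def using v h by (auto simp: field_simps)
  define k where "k = nat \<lfloor>s\<rfloor>"
  have k: "real k \<le> s" "s < real k + 1" unfolding k_def using s by linarith+
  have kn: "k < n" using k s by linarith
  have grid_le: "R (a + real j * h) \<le> R (a + p * h)" if "real j \<le> p" "p < real n" for j p
  proof (rule R)
    show "a + real j * h \<le> a + p * h" using that h by (simp add: mult_right_mono)
    show "a + p * h < 1" using mult_strict_right_mono[OF that(2) h(1)] h by simp
  qed (use h in simp)
  have term_le: "R (a + real ((k + i) mod n) * h) \<le> R (cyclic_shift a (real i * h) v)" if i: "i < n" for i
  proof (cases "s + real i < real n")
    case True
    then have "k + i < n" using k by linarith
    moreover have "v < 1 - real i * h"
      using mult_strict_right_mono[OF True h(1)] h s by (simp add: algebra_simps)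
    ultimately show ?thesis
      using grid_le[of "k + i" "s + real i"] True k v s(3) by (simp add: cyclic_shift_def algebra_simps)
  next
    case False
    then have ki: "n \<le> k + i" using k by linarith
    have "\<not> v < 1 - real i * h"
      using mult_right_mono[of "real n" "s + real i" h] False h s by (simp add: algebra_simps)
    then have "cyclic_shift a (real i * h) v = a + (s + real i - real n) * h"
      using v(1) s(3) h(2) unfolding cyclic_shift_def by (simp add: algebra_simps)
    moreover have "(k + i) mod n = k + i - n" using ki kn i by (simp add: mod_if)
    moreover have "real (k + i - n) \<le> s + real i - real n" "s + real i - real n < real n"
      using ki k s i by (simp_all add: of_nat_diff)
    ultimately show ?thesis using grid_le by simp
  qed
  have "(\<Sum>j<n. R (a + real j * h)) = (\<Sum>i<n. R (a + real ((k + i) mod n) * h))"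
    using sum_mod_shift[OF kn, of "\<lambda>j. R (a + real j * h)"] by simp
  also have "\<dots> \<le> (\<Sum>i<n. R (cyclic_shift a (real i * h) v))"
    by (rule sum_mono) (use term_le in auto)
  finally show ?thesis .
qed

lemma (in prob_space) measure_lt_le_of_uniform:
  fixes f :: "real \<Rightarrow> real"
  assumes U[measurable]: "U \<in> borel_measurable M" and dU: "distr M borel U = unit_uniform"
    and f[measurable]: "f \<in> borel_measurable borel" and a: "0 \<le> a"
    and ge: "\<And>v. a \<le> v \<Longrightarrow> v < 1 \<Longrightarrow> t \<le> f v"
  shows "measure M {\<omega> \<in> space M. f (U \<omega>) < t} \<le> a"
proof -
  have "measure M {\<omega> \<in> space M. f (U \<omega>) < t} = measure unit_uniform {v. f v < t}"
    unfolding dU[symmetric] by (subst measure_distr) (auto simp: vimage_def Int_def conj_commute)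
  also have "\<dots> = measure lborel ({0..<1} \<inter> {v. f v < t})"
    by (rule measure_unit_uniform_Ico) measurable
  also have "\<dots> \<le> measure lborel {0..<a}"
  proof (rule measure_mono_fmeasurable)
    show "{0..<1} \<inter> {v. f v < t} \<subseteq> {0..<a}"
      using ge by (force simp: not_le[symmetric])
  qed (use a in \<open>auto simp: fmeasurable_def\<close>)
  finally show ?thesis using a by simp
qed

context real_rv
begin

lemma distr_quantile_transform_cyclic_shift:
  assumes U[measurable]: "U \<in> borel_measurable M" and dU: "distr M borel U = unit_uniform"
    and "0 \<le> a" "a < 1" "0 \<le> d" "d < 1 - a"
  shows "distr M borel (\<lambda>\<omega>. quantile_transform c (cyclic_shift a d (U \<omega>))) = distr M borel X"
proof -
  have "distr M borel (\<lambda>\<omega>. quantile_transform c (cyclic_shift a d (U \<omega>)))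
      = distr (distr (distr M borel U) borel (cyclic_shift a d)) borel (quantile_transform c)"
    by (simp add: distr_distr comp_def)
  also have "\<dots> = distr M borel X"
    using assms by (simp add: dU distr_cyclic_shift distr_quantile_transform)
  finally show ?thesis .
qed

end

context integrable_rv
begin

lemma ex_quantile_lower_bound:
  assumes "0 \<le> a" "a = 0 \<Longrightarrow> \<exists>c. AE \<omega> in M. c \<le> X \<omega>"
  obtains b where "\<And>v. a \<le> v \<Longrightarrow> 0 < v \<Longrightarrow> v < 1 \<Longrightarrow> b \<le> quantile v"
proof (cases "a = 0")
  case True
  then obtain c where "AE \<omega> in M. c \<le> X \<omega>" using assms by blast
  then show ?thesis using that quantile_ge_essential_lower_bound by blast
next
  case False
  then show ?thesis using that[of "quantile a"] assms quantile_mono by auto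
qed

lemma ex_truncation_level:
  assumes a: "0 \<le> a" "a < 1" and t: "t < tail a / (1 - a)"
  obtains n where "0 < n" "t < b / real n + (LINT u:{a<..1 - (1 - a) / real n}|lborel. quantile u) / (1 - a)"
proof -
  have "(\<lambda>i. b / real (Suc i) + (LINT u:{a<..1 - (1 - a) / real (Suc i)}|lborel. quantile u) / (1 - a))
      \<longlonglongrightarrow> 0 + tail a / (1 - a)"
    using a by (intro tendsto_add tendsto_divide tail_truncated_limit LIMSEQ_Suc[OF lim_const_over_n]) auto
  then have "eventually (\<lambda>i. t < b / real (Suc i)
      + (LINT u:{a<..1 - (1 - a) / real (Suc i)}|lborel. quantile u) / (1 - a)) sequentially"
    using t by (intro order_tendstoD(1)) auto
  then obtain i where
    "t < b / real (Suc i) + (LINT u:{a<..1 - (1 - a) / real (Suc i)}|lborel. quantile u) / (1 - a)"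
    by (auto simp: eventually_sequentially)
  then show ?thesis by (intro that[of "Suc i"]) auto
qed

lemma cyclic_shift_average_ge:
  assumes a: "0 \<le> a" "a < 1" and b: "\<And>v. a \<le> v \<Longrightarrow> 0 < v \<Longrightarrow> v < 1 \<Longrightarrow> b \<le> quantile v"
    and n: "0 < n" and v: "a \<le> v" "v < 1"
  defines "h \<equiv> (1 - a) / real n"
  shows "b / real n + (LINT u:{a<..1 - h}|lborel. quantile u) / (1 - a)
    \<le> (1 / real n) * (\<Sum>j<n. quantile_transform b (cyclic_shift a (real j * h) v))"
proof -
  let ?R = "quantile_transform b"
  obtain m where m: "n = Suc m" using n gr0_implies_Suc by blast
  have h: "0 < h" "real n * h = 1 - a" unfolding h_def using a n by auto
  have R_mono: "?R x \<le> ?R y" if "a \<le> x" "x \<le> y" "y < 1" for x y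
    using that b[of y] quantile_mono[of x y] by (auto simp: quantile_transform_def)
  have grid: "a + real (Suc j) * h \<in> {0<..<1}" if "j < m" for j
  proof -
    have "real (Suc j) * h < real n * h" using that m h by (intro mult_strict_right_mono) auto
    moreover have "0 < real (Suc j) * h" using h by simp
    ultimately have "0 < a + real (Suc j) * h" "a + real (Suc j) * h < 1" using a h by linarith+
    then show ?thesis by simp
  qed
  let ?S = "\<Sum>j\<in>{1..m}. quantile (a + real j * h)"
  have grid_sum: "(\<Sum>j<n. ?R (a + real j * h)) = ?R a + ?S"
    unfolding m sum.lessThan_Suc_shift using grid
    by (simp add: quantile_transform_def sum.atLeast1_atMost_eq)
  have "(LINT u:{a<..1 - h}|lborel. quantile u) \<le> h * ?S"
  proof -
    have "a + real m * h = 1 - h" using h m by (simp add: algebra_simps)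
    then show ?thesis using set_integral_le_riemann_sum[OF a(1) h(1), of m] h by simp
  qed
  then have "(LINT u:{a<..1 - h}|lborel. quantile u) / (1 - a) \<le> h * ?S / (1 - a)"
    using a by (intro divide_right_mono) auto
  also have "h * ?S / (1 - a) = ?S / real n" unfolding h_def using a by simp
  finally have "b / real n + (LINT u:{a<..1 - h}|lborel. quantile u) / (1 - a) \<le> ?R a / real n + ?S / real n"
    using b[of a] a n by (cases "0 < a") (auto simp: quantile_transform_def intro!: add_mono divide_right_mono)
  also have "\<dots> = (\<Sum>j<n. ?R (a + real j * h)) / real n"
    unfolding grid_sum by (simp add: add_divide_distrib)
  also have "\<dots> \<le> (\<Sum>j<n. ?R (cyclic_shift a (real j * h) v)) / real n"
    unfolding h_def using a n v R_mono
    by (intro divide_right_mono left_riemann_sum_le_cyclic_shift_sum) auto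
  finally show ?thesis by simp
qed

text \<open>The key construction: averaging \<open>n\<close> cyclically shifted rearrangements of \<open>X\<close> flattens its
  upper tail above level \<open>a\<close> to (nearly) its mean \<open>ES M a X\<close>, without increasing \<open>\<rho>\<close>.\<close>
lemma ex_rearrangement_average:
  assumes atomless: "atomless M" and D: "convex_rv_set D" "law_closed M D" "X \<in> D"
    and \<rho>: "quasi_convex_on D \<rho>" "law_invariant_on M D \<rho>"
    and a: "0 \<le> a" "a < 1" and bdd: "a = 0 \<Longrightarrow> \<exists>c. AE \<omega> in M. c \<le> X \<omega>"
    and t: "ereal t < ES M a X"
  shows "\<exists>Y\<in>D. \<rho> Y \<le> \<rho> X \<and> measure M {\<omega> \<in> space M. Y \<omega> < t} \<le> a"
proof -
  obtain b where b: "\<And>v. a \<le> v \<Longrightarrow> 0 < v \<Longrightarrow> v < 1 \<Longrightarrow> b \<le> quantile v"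
    using ex_quantile_lower_bound[OF a(1) bdd] by blast
  obtain n where n: "0 < n"
    and tn: "t < b / real n + (LINT u:{a<..1 - (1 - a) / real n}|lborel. quantile u) / (1 - a)"
    using ex_truncation_level[OF a] t a by (auto simp: ES_eq_tail)
  define h where "h = (1 - a) / real n"
  obtain U where U[measurable]: "U \<in> borel_measurable M" and dU: "distr M borel U = unit_uniform"
    using atomless_ex_uniform[OF prob_space_axioms atomless] by blast
  define Z where "Z j = (\<lambda>\<omega>. quantile_transform b (cyclic_shift a (real j * h) (U \<omega>)))" for j
  have Z_measurable[measurable]: "Z j \<in> borel_measurable M" for j
    unfolding Z_def by measurable
  have law_Z: "distr M borel (Z j) = distr M borel X" if "j < n" for j
  proof -
    have "real j * h < real n * h" using that a n by (intro mult_strict_right_mono) (auto simp: h_def)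
    then show ?thesis
      unfolding Z_def using a n h_def by (intro distr_quantile_transform_cyclic_shift U dU) auto
  qed
  note Z = law_closed_law_invariant_eq[OF D(2) \<rho>(2) D(3) Z_measurable law_Z]
  define Y where "Y = (\<lambda>\<omega>. (1 / real n) * (\<Sum>j<n. Z j \<omega>))"
  have Y: "Y \<in> D \<and> \<rho> Y \<le> \<rho> X"
    unfolding Y_def using Z(2) by (intro quasi_convex_on_average[OF \<rho>(1) D(1) Z(1) _ n]) auto
  define f where "f v = (1 / real n) * (\<Sum>j<n. quantile_transform b (cyclic_shift a (real j * h) v))" for v
  have "t \<le> f v" if "a \<le> v" "v < 1" for v
  proof -
    have "b / real n + (LINT u:{a<..1 - h}|lborel. quantile u) / (1 - a) \<le> f v"
      unfolding f_def h_def by (rule cyclic_shift_average_ge) (use a b n that in auto)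
    then show ?thesis using tn unfolding h_def by linarith
  qed
  then have "measure M {\<omega> \<in> space M. f (U \<omega>) < t} \<le> a"
    using a by (intro measure_lt_le_of_uniform[OF U dU]) (auto simp: f_def)
  moreover have "Y = (\<lambda>\<omega>. f (U \<omega>))" by (simp add: fun_eq_iff Y_def Z_def f_def)
  ultimately show ?thesis using Y by (intro bexI[of _ Y]) simp_all
qed

end

section \<open>Quasi-convexity of expected shortfall\<close>

lemma (in prob_space) VaR_1_mix_le:
  assumes X[measurable]: "X \<in> borel_measurable M" and Y[measurable]: "Y \<in> borel_measurable M"
    and \<gamma>: "0 \<le> \<gamma>" "\<gamma> \<le> 1"
  shows "VaR M 1 (\<lambda>w. \<gamma> * X w + (1 - \<gamma>) * Y w) \<le> max (VaR M 1 X) (VaR M 1 Y)"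
proof (rule ccontr)
  let ?Z = "\<lambda>w. \<gamma> * X w + (1 - \<gamma>) * Y w"
  assume "\<not> ?thesis"
  then obtain x y where x: "1 \<le> cdf_rv M X x" "ereal x < VaR M 1 ?Z" and y: "1 \<le> cdf_rv M Y y" "ereal y < VaR M 1 ?Z"
    unfolding not_le max_less_iff_conj VaR_def[of M 1 X] VaR_def[of M 1 Y] Inf_less_iff by auto
  have "AE w in M. X w \<le> x" "AE w in M. Y w \<le> y"
    using x(1) y(1) prob_eq_1[of "{w \<in> space M. X w \<le> x}"] prob_eq_1[of "{w \<in> space M. Y w \<le> y}"]
      prob_le_1 unfolding cdf_rv_def by (auto simp: antisym)
  then have "AE w in M. ?Z w \<le> max x y"
  proof eventually_elim
    case (elim w)
    have "?Z w \<le> \<gamma> * max x y + (1 - \<gamma>) * max x y"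
      using elim \<gamma> by (intro add_mono mult_left_mono) auto
    then show ?case by (simp add: algebra_simps)
  qed
  then have "cdf_rv M ?Z (max x y) = 1"
    using prob_eq_1[of "{w \<in> space M. ?Z w \<le> max x y}"] unfolding cdf_rv_def by simp
  then have "max x y \<in> {x. 1 \<le> cdf_rv M ?Z x}" by simp
  then have "VaR M 1 ?Z \<le> ereal (max x y)" unfolding VaR_def by (intro Inf_lower imageI)
  then show False using x(2) y(2) by (simp add: max_def split: if_splits)
qed

lemma (in prob_space) integrable_excess:
  fixes X :: "'a \<Rightarrow> real"
  shows "integrable M X \<Longrightarrow> integrable M (\<lambda>w. max 0 (X w - t))"
  by (rule integrable_max) auto

lemma (in prob_space) expectation_excess_mix_le:
  fixes X Y :: "'a \<Rightarrow> real"
  assumes X: "integrable M X" and Y: "integrable M Y" and \<gamma>: "0 \<le> \<gamma>" "\<gamma> \<le> 1"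
  shows "(\<integral>w. max 0 (\<gamma> * X w + (1 - \<gamma>) * Y w - (\<gamma> * s + (1 - \<gamma>) * u)) \<partial>M)
    \<le> \<gamma> * (\<integral>w. max 0 (X w - s) \<partial>M) + (1 - \<gamma>) * (\<integral>w. max 0 (Y w - u) \<partial>M)"
proof -
  have "max 0 (\<gamma> * X w + (1 - \<gamma>) * Y w - (\<gamma> * s + (1 - \<gamma>) * u))
      \<le> \<gamma> * max 0 (X w - s) + (1 - \<gamma>) * max 0 (Y w - u)" for w
  proof -
    have "\<gamma> * X w + (1 - \<gamma>) * Y w - (\<gamma> * s + (1 - \<gamma>) * u) = \<gamma> * (X w - s) + (1 - \<gamma>) * (Y w - u)"
      by (simp add: algebra_simps)
    also have "\<dots> \<le> \<gamma> * max 0 (X w - s) + (1 - \<gamma>) * max 0 (Y w - u)"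
      using \<gamma> by (intro add_mono mult_left_mono) auto
    finally show ?thesis using \<gamma> by simp
  qed
  then have "(\<integral>w. max 0 (\<gamma> * X w + (1 - \<gamma>) * Y w - (\<gamma> * s + (1 - \<gamma>) * u)) \<partial>M)
      \<le> (\<integral>w. \<gamma> * max 0 (X w - s) + (1 - \<gamma>) * max 0 (Y w - u) \<partial>M)"
    using X Y by (intro integral_mono integrable_add integrable_mult_right integrable_excess) auto
  also have "\<dots> = \<gamma> * (\<integral>w. max 0 (X w - s) \<partial>M) + (1 - \<gamma>) * (\<integral>w. max 0 (Y w - u) \<partial>M)"
    using X Y by (simp add: integrable_excess)
  finally show ?thesis .
qed

text \<open>For \<open>a > 0\<close> the tail integral is the minimum over \<open>t\<close> of \<open>(1 - a) t + E (X - t)\<^sup>+\<close>, a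
  convex function of \<open>X\<close>; hence it is convex along mixtures.\<close>
lemma tail_mix_le:
  assumes P: "prob_space M" and X: "integrable M X" and Y: "integrable M Y"
    and \<gamma>: "0 \<le> \<gamma>" "\<gamma> \<le> 1" and a: "0 \<le> a" "a < 1"
  defines "Z \<equiv> \<lambda>w. \<gamma> * X w + (1 - \<gamma>) * Y w"
  shows "tail_integral.tail (real_rv.quantile M Z) a
    \<le> \<gamma> * tail_integral.tail (real_rv.quantile M X) a + (1 - \<gamma>) * tail_integral.tail (real_rv.quantile M Y) a"
proof -
  interpret P: prob_space M by (fact P)
  interpret X: integrable_rv M X using P X by (rule integrable_rvI)
  interpret Y: integrable_rv M Y using P Y by (rule integrable_rvI)
  interpret Z: integrable_rv M Z using P X Y unfolding Z_def by (intro integrable_rvI) auto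
  show ?thesis
  proof (cases "a = 0")
    case True
    have "(\<integral>w. Z w \<partial>M) = \<gamma> * (\<integral>w. X w \<partial>M) + (1 - \<gamma>) * (\<integral>w. Y w \<partial>M)"
      using X Y by (simp add: Z_def)
    then have "Z.tail 0 = \<gamma> * X.tail 0 + (1 - \<gamma>) * Y.tail 0"
      using Z.integral_quantile[of "\<lambda>x. x"] X.integral_quantile[of "\<lambda>x. x"]
        Y.integral_quantile[of "\<lambda>x. x"]
      by (simp add: Z.tail_def X.tail_def Y.tail_def)
    then show ?thesis using True by simp
  next
    case False
    then have a': "0 < a" "a < 1" using a by auto
    let ?s = "X.quantile a" and ?u = "Y.quantile a"
    have "Z.tail a \<le> (1 - a) * (\<gamma> * ?s + (1 - \<gamma>) * ?u) + (\<integral>w. max 0 (Z w - (\<gamma> * ?s + (1 - \<gamma>) * ?u)) \<partial>M)"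
      using Z.tail_le_excess[OF a] Z.expectation_excess by simp
    also have "\<dots> \<le> \<gamma> * ((1 - a) * ?s + (\<integral>w. max 0 (X w - ?s) \<partial>M))
        + (1 - \<gamma>) * ((1 - a) * ?u + (\<integral>w. max 0 (Y w - ?u) \<partial>M))"
      using P.expectation_excess_mix_le[OF X Y \<gamma>, of ?s ?u] unfolding Z_def by (simp add: algebra_simps)
    also have "\<dots> = \<gamma> * X.tail a + (1 - \<gamma>) * Y.tail a"
      using X.tail_eq_excess[OF a'] Y.tail_eq_excess[OF a'] X.expectation_excess Y.expectation_excess
      by simp
    finally show ?thesis .
  qed
qed

lemma ES_mix_le:
  assumes P: "prob_space M" and X: "integrable M X" and Y: "integrable M Y"
    and \<gamma>: "0 \<le> \<gamma>" "\<gamma> \<le> 1" and a: "0 \<le> a" "a \<le> 1"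
  shows "ES M a (\<lambda>w. \<gamma> * X w + (1 - \<gamma>) * Y w) \<le> max (ES M a X) (ES M a Y)"
proof (cases "a = 1")
  case True
  then show ?thesis using prob_space.VaR_1_mix_le[OF P _ _ \<gamma>] X Y by (simp add: ES_def)
next
  case False
  then have a: "0 \<le> a" "a < 1" using a by auto
  let ?Z = "\<lambda>w. \<gamma> * X w + (1 - \<gamma>) * Y w"
  interpret X: integrable_rv M X using P X by (rule integrable_rvI)
  interpret Y: integrable_rv M Y using P Y by (rule integrable_rvI)
  interpret Z: integrable_rv M ?Z using P X Y by (intro integrable_rvI) auto
  have "Z.tail a / (1 - a) \<le> (\<gamma> * X.tail a + (1 - \<gamma>) * Y.tail a) / (1 - a)"
    using tail_mix_le[OF P X Y \<gamma> a] a by (intro divide_right_mono) auto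
  also have "\<dots> = \<gamma> * (X.tail a / (1 - a)) + (1 - \<gamma>) * (Y.tail a / (1 - a))"
    by (simp add: add_divide_distrib)
  also have "\<dots> \<le> \<gamma> * max (X.tail a / (1 - a)) (Y.tail a / (1 - a)) + (1 - \<gamma>) * max (X.tail a / (1 - a)) (Y.tail a / (1 - a))"
    using \<gamma> by (intro add_mono mult_left_mono) auto
  also have "\<dots> = max (X.tail a / (1 - a)) (Y.tail a / (1 - a))"
    by (simp add: algebra_simps)
  finally show ?thesis using a by (simp add: X.ES_eq_tail Y.ES_eq_tail Z.ES_eq_tail flip: ereal_max)
qed

section \<open>Expected shortfall with a level function\<close>

lemma convex_rv_set_L1: "convex_rv_set (L1 M)"
  unfolding convex_rv_set_def L1_def by auto

lemma law_closed_L1: "law_closed M (L1 M)"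
  unfolding law_closed_def L1_def
proof (intro ballI impI, unfold mem_Collect_eq)
  fix X Y :: "'a \<Rightarrow> real"
  assume X: "integrable M X" and Y: "Y \<in> borel_measurable M"
    and law: "distr M borel Y = distr M borel X"
  have "integrable (distr M borel X) (\<lambda>x. x)"
    using X integrable_distr_eq[OF borel_measurable_integrable[OF X], of "\<lambda>x. x"] by simp
  then have "integrable (distr M borel Y) (\<lambda>x. x)" unfolding law .
  then show "integrable M Y" using integrable_distr_eq[OF Y, of "\<lambda>x. x"] by simp
qed

lemma convex_rv_set_L1_bdd_below: "convex_rv_set (L1_bdd_below M)"
  unfolding convex_rv_set_def
proof (intro ballI)
  fix X Y \<gamma> assume X: "X \<in> L1_bdd_below M" and Y: "Y \<in> L1_bdd_below M" and \<gamma>: "\<gamma> \<in> {0..1::real}"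
  obtain c d where "AE \<omega> in M. c \<le> X \<omega>" "AE \<omega> in M. d \<le> Y \<omega>"
    using X Y unfolding L1_bdd_below_def by auto
  then have "AE \<omega> in M. min c d \<le> \<gamma> * X \<omega> + (1 - \<gamma>) * Y \<omega>"
  proof eventually_elim
    case (elim \<omega>)
    have "\<gamma> * min c d + (1 - \<gamma>) * min c d \<le> \<gamma> * X \<omega> + (1 - \<gamma>) * Y \<omega>"
      using elim \<gamma> by (intro add_mono mult_left_mono) auto
    then show ?case by (simp add: algebra_simps)
  qed
  then show "(\<lambda>\<omega>. \<gamma> * X \<omega> + (1 - \<gamma>) * Y \<omega>) \<in> L1_bdd_below M"
    using X Y unfolding L1_bdd_below_def by auto
qed

lemma law_closed_L1_bdd_below: "law_closed M (L1_bdd_below M)"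
  unfolding law_closed_def
proof (intro ballI impI)
  fix X Y assume X: "X \<in> L1_bdd_below M" and Y[measurable]: "Y \<in> borel_measurable M"
    and law: "distr M borel Y = distr M borel X"
  have X_measurable[measurable]: "X \<in> borel_measurable M"
    using X unfolding L1_bdd_below_def by auto
  have "integrable M Y"
    using law_closed_L1[of M] X Y law unfolding L1_bdd_below_def L1_def law_closed_def by blast
  moreover obtain c where "AE \<omega> in M. c \<le> X \<omega>" using X unfolding L1_bdd_below_def by auto
  then have "AE x in distr M borel Y. c \<le> x" unfolding law by (subst AE_distr_iff) auto
  then have "AE \<omega> in M. c \<le> Y \<omega>" by (subst (asm) AE_distr_iff) auto
  ultimately show "Y \<in> L1_bdd_below M" unfolding L1_bdd_below_def by auto
qed

lemma ES_Lambda_quasi_convex: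
  assumes P: "prob_space M" and D: "D \<subseteq> L1 M" "convex_rv_set D" and \<Lambda>: "\<And>x. 0 \<le> \<Lambda> x \<and> \<Lambda> x \<le> 1"
  shows "quasi_convex_on D (ES_Lambda M \<Lambda>)"
  unfolding quasi_convex_on_def ES_Lambda_def
proof (intro ballI SUP_least)
  fix X Y \<gamma> x assume X: "X \<in> D" and Y: "Y \<in> D" and \<gamma>: "\<gamma> \<in> {0..1::real}"
  have "ES M (\<Lambda> x) (\<lambda>\<omega>. \<gamma> * X \<omega> + (1 - \<gamma>) * Y \<omega>) \<le> max (ES M (\<Lambda> x) X) (ES M (\<Lambda> x) Y)"
    using X Y \<gamma> D \<Lambda>[of x] by (intro ES_mix_le[OF P]) (auto simp: L1_def)
  then have "min (ES M (\<Lambda> x) (\<lambda>\<omega>. \<gamma> * X \<omega> + (1 - \<gamma>) * Y \<omega>)) (ereal x)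
      \<le> max (min (ES M (\<Lambda> x) X) (ereal x)) (min (ES M (\<Lambda> x) Y) (ereal x))"
    unfolding min_max_distrib1[symmetric] by (rule min.mono) simp
  also have "\<dots> \<le> max (SUP x. min (ES M (\<Lambda> x) X) (ereal x)) (SUP x. min (ES M (\<Lambda> x) Y) (ereal x))"
    by (intro max.mono SUP_upper) auto
  finally show "min (ES M (\<Lambda> x) (\<lambda>\<omega>. \<gamma> * X \<omega> + (1 - \<gamma>) * Y \<omega>)) (ereal x)
      \<le> max (SUP x. min (ES M (\<Lambda> x) X) (ereal x)) (SUP x. min (ES M (\<Lambda> x) Y) (ereal x))" .
qed

lemma cdf_rv_eq_of_distr_eq:
  assumes [measurable]: "X \<in> borel_measurable M" "Y \<in> borel_measurable M"
    and law: "distr M borel X = distr M borel Y"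
  shows "cdf_rv M X = cdf_rv M Y"
proof -
  have "cdf_rv M Z x = measure (distr M borel Z) {..x}" if [measurable]: "Z \<in> borel_measurable M" for Z x
    unfolding cdf_rv_def by (subst measure_distr) (auto simp: vimage_def Int_def conj_commute)
  then show ?thesis using law by (auto simp: fun_eq_iff)
qed

lemma ES_Lambda_law_invariant:
  assumes "D \<subseteq> L1 M"
  shows "law_invariant_on M D (ES_Lambda M \<Lambda>)"
  unfolding law_invariant_on_def
proof (intro ballI impI)
  fix X Y assume "X \<in> D" "Y \<in> D" "distr M borel X = distr M borel Y"
  then have "cdf_rv M X = cdf_rv M Y"
    using assms by (intro cdf_rv_eq_of_distr_eq) (auto simp: L1_def)
  then show "ES_Lambda M \<Lambda> X = ES_Lambda M \<Lambda> Y"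
    unfolding ES_Lambda_def ES_def VaR_def by (simp only:)
qed

lemma VaR_Lambda_ge:
  assumes "\<And>z. z < t \<Longrightarrow> cdf_rv M Y z < \<Lambda> z"
  shows "ereal t \<le> VaR_Lambda M \<Lambda> Y"
  unfolding VaR_Lambda_def
proof (rule Inf_greatest)
  fix w assume "w \<in> ereal ` {x. \<Lambda> x \<le> cdf_rv M Y x}"
  then obtain z where "w = ereal z" "\<Lambda> z \<le> cdf_rv M Y z" by auto
  then show "ereal t \<le> w" using assms[of z] by force
qed

lemma VaR_plus_Lambda_ge:
  assumes "\<And>z. z < t \<Longrightarrow> cdf_rv M Y z \<le> \<Lambda> z"
  shows "ereal t \<le> VaR_plus_Lambda M \<Lambda> Y"
  unfolding VaR_plus_Lambda_def
proof (rule Inf_greatest)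
  fix w assume "w \<in> ereal ` {x. \<Lambda> x < cdf_rv M Y x}"
  then obtain z where "w = ereal z" "\<Lambda> z < cdf_rv M Y z" by auto
  then show "ereal t \<le> w" using assms[of z] by force
qed

lemma VaR_Lambda_le_ES_Lambda:
  assumes P: "prob_space M" and X: "integrable M X" and \<Lambda>: "\<And>x. 0 < \<Lambda> x \<and> \<Lambda> x \<le> 1"
  shows "VaR_Lambda M \<Lambda> X \<le> ES_Lambda M \<Lambda> X"
proof (rule dense_ge)
  interpret integrable_rv M X using P X by (rule integrable_rvI)
  fix y assume y: "ES_Lambda M \<Lambda> X < y"
  show "VaR_Lambda M \<Lambda> X \<le> y"
  proof (cases y)
    case (real x)
    have "min (ES M (\<Lambda> x) X) (ereal x) \<le> ES_Lambda M \<Lambda> X" unfolding ES_Lambda_def by (rule SUP_upper) simp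
    then have "min (ES M (\<Lambda> x) X) (ereal x) < ereal x"
      using y real by simp
    then have "ES M (\<Lambda> x) X < ereal x"
      by (simp add: min_less_iff_disj)
    then have "VaR M (\<Lambda> x) X < ereal x"
      using ES_ge_VaR[of "\<Lambda> x"] \<Lambda>[of x] by simp
    then obtain z where "\<Lambda> x \<le> cdf_rv M X z" "z < x" unfolding VaR_def Inf_less_iff by auto
    then have "\<Lambda> x \<le> cdf_rv M X x" using cdf_rv_mono[of z x] by simp
    then show ?thesis unfolding VaR_Lambda_def real by (intro Inf_lower) auto
  qed (use y in auto)
qed

lemma VaR_plus_Lambda_le_ES_Lambda:
  assumes P: "prob_space M" and X: "integrable M X" and \<Lambda>: "\<And>x. 0 \<le> \<Lambda> x \<and> \<Lambda> x < 1"
  shows "VaR_plus_Lambda M \<Lambda> X \<le> ES_Lambda M \<Lambda> X"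
proof (rule dense_ge)
  interpret integrable_rv M X using P X by (rule integrable_rvI)
  fix y assume y: "ES_Lambda M \<Lambda> X < y"
  show "VaR_plus_Lambda M \<Lambda> X \<le> y"
  proof (cases y)
    case (real x)
    have "min (ES M (\<Lambda> x) X) (ereal x) \<le> ES_Lambda M \<Lambda> X" unfolding ES_Lambda_def by (rule SUP_upper) simp
    then have "min (ES M (\<Lambda> x) X) (ereal x) < ereal x"
      using y real by simp
    then have "ES M (\<Lambda> x) X < ereal x"
      by (simp add: min_less_iff_disj)
    then have "VaR_plus M (\<Lambda> x) X < ereal x"
      using ES_ge_VaR_plus[of "\<Lambda> x"] \<Lambda>[of x] by simp
    then obtain z where "\<Lambda> x < cdf_rv M X z" "z < x" unfolding VaR_plus_def Inf_less_iff by auto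
    then have "\<Lambda> x < cdf_rv M X x" using cdf_rv_mono[of z x] by simp
    then show ?thesis unfolding VaR_plus_Lambda_def real by (intro Inf_lower) auto
  qed (use y in auto)
qed

lemma SUP_min_eq_INF_max:
  fixes g :: "real \<Rightarrow> ereal"
  assumes "antimono g"
  shows "(SUP x. min (g x) (ereal x)) = (INF x. max (g x) (ereal x))"
proof (rule antisym)
  have "min (g x) (ereal x) \<le> max (g y) (ereal y)" for x y
  proof (cases "x \<le> y")
    case True
    then have "min (g x) (ereal x) \<le> ereal y" by (simp add: min.coboundedI2)
    then show ?thesis by (simp add: le_max_iff_disj)
  next
    case False
    then have "g x \<le> g y" using antimonoD[OF assms, of y x] by simp
    then have "min (g x) (ereal x) \<le> g y" by (simp add: min.coboundedI1)
    then show ?thesis by (simp add: le_max_iff_disj)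
  qed
  then show "(SUP x. min (g x) (ereal x)) \<le> (INF x. max (g x) (ereal x))"
    by (intro SUP_least INF_greatest)
  show "(INF x. max (g x) (ereal x)) \<le> (SUP x. min (g x) (ereal x))"
  proof (rule ccontr)
    assume "\<not> ?thesis"
    then have "(SUP x. min (g x) (ereal x)) < (INF x. max (g x) (ereal x))" by (simp add: not_le)
    then obtain r where r: "(SUP x. min (g x) (ereal x)) < ereal r" "ereal r < (INF x. max (g x) (ereal x))"
      using ereal_dense2 by blast
    have "min (g r) (ereal r) \<le> (SUP x. min (g x) (ereal x))" by (rule SUP_upper) simp
    then have "min (g r) (ereal r) < ereal r" using r(1) by simp
    moreover have "(INF x. max (g x) (ereal x)) \<le> max (g r) (ereal r)" by (rule INF_lower) simp
    then have "ereal r < max (g r) (ereal r)" using r(2) by simp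
    ultimately show False by (simp add: min_less_iff_disj less_max_iff_disj)
  qed
qed

lemma ES_Lambda_eq_INF:
  assumes P: "prob_space M" and X: "integrable M X"
    and \<Lambda>: "antimono \<Lambda>" "\<And>x. 0 \<le> \<Lambda> x \<and> \<Lambda> x \<le> 1"
  shows "ES_Lambda M \<Lambda> X = (INF x. max (ES M (\<Lambda> x) X) (ereal x))"
proof -
  interpret integrable_rv M X using P X by (rule integrable_rvI)
  have "antimono (\<lambda>x. ES M (\<Lambda> x) X)"
    using \<Lambda> by (intro antimonoI ES_mono) (auto dest: antimonoD)
  then show ?thesis unfolding ES_Lambda_def by (rule SUP_min_eq_INF_max)
qed

lemma ES_Lambda_le_by_levels:
  assumes "\<And>x t. t < x \<Longrightarrow> ereal t < ES M (\<Lambda> x) X \<Longrightarrow> ereal t \<le> r"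
  shows "ES_Lambda M \<Lambda> X \<le> r"
  unfolding ES_Lambda_def
proof (rule SUP_least, rule dense_le)
  fix x y assume y: "y < min (ES M (\<Lambda> x) X) (ereal x)"
  show "y \<le> r"
  proof (cases y)
    case (real t)
    then have "t < x" "ereal t < ES M (\<Lambda> x) X" using y by auto
    then show ?thesis unfolding real by (rule assms)
  qed (use y in auto)
qed

lemma (in prob_space) cdf_rv_le_measure_less:
  "Y \<in> borel_measurable M \<Longrightarrow> z < t \<Longrightarrow> cdf_rv M Y z \<le> measure M {\<omega> \<in> space M. Y \<omega> < t}"
  unfolding cdf_rv_def by (intro finite_measure_mono) auto

lemma ES_Lambda_le_of_VaR_Lambda_le:
  assumes P: "prob_space M" and atomless: "atomless M"
    and \<Lambda>: "antimono \<Lambda>" "\<And>x. 0 < \<Lambda> x \<and> \<Lambda> x \<le> 1"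
    and \<rho>: "\<forall>X\<in>L1 M. VaR_Lambda M \<Lambda> X \<le> \<rho> X" "quasi_convex_on (L1 M) \<rho>" "law_invariant_on M (L1 M) \<rho>"
    and X: "X \<in> L1 M"
  shows "ES_Lambda M \<Lambda> X \<le> \<rho> X"
proof (rule ES_Lambda_le_by_levels)
  interpret integrable_rv M X using P X by (intro integrable_rvI) (auto simp: L1_def)
  fix x t assume tx: "t < x" and tES: "ereal t < ES M (\<Lambda> x) X"
  have \<Lambda>_le: "\<Lambda> x \<le> \<Lambda> z" if "z < t" for z using antimonoD[OF \<Lambda>(1), of z x] that tx by simp
  show "ereal t \<le> \<rho> X"
  proof (cases "\<Lambda> x = 1")
    case True
    have "cdf_rv M X z < \<Lambda> z" if z: "z < t" for z
    proof (rule ccontr)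
      assume "\<not> cdf_rv M X z < \<Lambda> z"
      then have "1 \<le> cdf_rv M X z" using \<Lambda>_le[OF z] True \<Lambda>(2)[of z] by auto
      then have "VaR M 1 X \<le> ereal z" unfolding VaR_def by (intro Inf_lower) auto
      moreover have "ereal t < VaR M 1 X" using tES True by (simp add: ES_def)
      ultimately have "ereal t < ereal z" by (simp only: less_le_trans)
      then show False using z by simp
    qed
    then have "ereal t \<le> VaR_Lambda M \<Lambda> X" by (rule VaR_Lambda_ge)
    also have "\<dots> \<le> \<rho> X" using \<rho>(1) X by blast
    finally show ?thesis .
  next
    case False
    then have a: "0 < \<Lambda> x" "\<Lambda> x < 1" using \<Lambda>(2)[of x] by auto
    then obtain a where a': "0 < a" "a < \<Lambda> x" "t < tail a / (1 - a)"
      using tail_avg_left[of "\<Lambda> x" t] tES by (auto simp: ES_eq_tail)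
    then obtain Y where Y: "Y \<in> L1 M" "\<rho> Y \<le> \<rho> X" "measure M {\<omega> \<in> space M. Y \<omega> < t} \<le> a"
      using ex_rearrangement_average[OF atomless convex_rv_set_L1 law_closed_L1 X \<rho>(2,3), of a t] a
      by (auto simp: ES_eq_tail)
    have "cdf_rv M Y z < \<Lambda> z" if "z < t" for z
      using cdf_rv_le_measure_less[of Y z t] Y(1,3) a'(2) \<Lambda>_le[OF that] that
      by (auto simp: L1_def)
    then have "ereal t \<le> VaR_Lambda M \<Lambda> Y" by (rule VaR_Lambda_ge)
    also have "\<dots> \<le> \<rho> Y" using \<rho>(1) Y(1) by blast
    finally show ?thesis using Y(2) by simp
  qed
qed

lemma ES_Lambda_le_of_VaR_plus_Lambda_le:
  assumes P: "prob_space M" and atomless: "atomless M"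
    and \<Lambda>: "antimono \<Lambda>" "\<And>x. 0 \<le> \<Lambda> x \<and> \<Lambda> x < 1"
    and D: "D \<subseteq> L1 M" "convex_rv_set D" "law_closed M D"
    and bdd: "(\<forall>x. 0 < \<Lambda> x) \<or> (\<forall>X\<in>D. \<exists>c. AE \<omega> in M. c \<le> X \<omega>)"
    and \<rho>: "\<forall>X\<in>D. VaR_plus_Lambda M \<Lambda> X \<le> \<rho> X" "quasi_convex_on D \<rho>" "law_invariant_on M D \<rho>"
    and X: "X \<in> D"
  shows "ES_Lambda M \<Lambda> X \<le> \<rho> X"
proof (rule ES_Lambda_le_by_levels)
  interpret integrable_rv M X using P X D(1) by (intro integrable_rvI) (auto simp: L1_def)
  fix x t assume tx: "t < x" and tES: "ereal t < ES M (\<Lambda> x) X"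
  obtain Y where Y: "Y \<in> D" "\<rho> Y \<le> \<rho> X" "measure M {\<omega> \<in> space M. Y \<omega> < t} \<le> \<Lambda> x"
    using ex_rearrangement_average[OF atomless D(2,3) X \<rho>(2,3), of "\<Lambda> x" t] \<Lambda>(2)[of x] bdd X tES
    by (metis less_irrefl)
  have "cdf_rv M Y z \<le> \<Lambda> z" if "z < t" for z
    using cdf_rv_le_measure_less[of Y z t] Y(1,3) D(1) antimonoD[OF \<Lambda>(1), of z x] that tx
    by (force simp: L1_def)
  then have "ereal t \<le> VaR_plus_Lambda M \<Lambda> Y" by (rule VaR_plus_Lambda_ge)
  also have "\<dots> \<le> \<rho> Y" using \<rho>(1) Y(1) by blast
  finally show "ereal t \<le> \<rho> X" using Y(2) by simp
qed

lemma is_min_ES_Lambda_VaR_Lambda: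
  assumes P: "prob_space M" and atomless: "atomless M"
    and \<Lambda>: "antimono \<Lambda>" "\<And>x. 0 < \<Lambda> x \<and> \<Lambda> x \<le> 1"
  shows "is_min_qc_li_above M (L1 M) (VaR_Lambda M \<Lambda>) (ES_Lambda M \<Lambda>)"
  unfolding is_min_qc_li_above_def
proof (intro conjI ballI allI impI)
  show "VaR_Lambda M \<Lambda> X \<le> ES_Lambda M \<Lambda> X" if "X \<in> L1 M" for X
    using VaR_Lambda_le_ES_Lambda[OF P _ \<Lambda>(2)] that by (simp add: L1_def)
  show "quasi_convex_on (L1 M) (ES_Lambda M \<Lambda>)"
    using ES_Lambda_quasi_convex[OF P subset_refl convex_rv_set_L1] \<Lambda>(2) by (simp add: less_imp_le)
  show "law_invariant_on M (L1 M) (ES_Lambda M \<Lambda>)"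
    by (rule ES_Lambda_law_invariant) simp
  show "ES_Lambda M \<Lambda> X \<le> \<rho> X"
    if "(\<forall>X\<in>L1 M. VaR_Lambda M \<Lambda> X \<le> \<rho> X) \<and> quasi_convex_on (L1 M) \<rho> \<and> law_invariant_on M (L1 M) \<rho>"
      and "X \<in> L1 M" for \<rho> X
    using that by (intro ES_Lambda_le_of_VaR_Lambda_le[OF P atomless \<Lambda>]) auto
qed

lemma is_min_ES_Lambda_VaR_plus_Lambda:
  assumes P: "prob_space M" and atomless: "atomless M"
    and \<Lambda>: "antimono \<Lambda>" "\<And>x. 0 \<le> \<Lambda> x \<and> \<Lambda> x < 1"
    and D: "D \<subseteq> L1 M" "convex_rv_set D" "law_closed M D"
    and bdd: "(\<forall>x. 0 < \<Lambda> x) \<or> (\<forall>X\<in>D. \<exists>c. AE \<omega> in M. c \<le> X \<omega>)"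
  shows "is_min_qc_li_above M D (VaR_plus_Lambda M \<Lambda>) (ES_Lambda M \<Lambda>)"
  unfolding is_min_qc_li_above_def
proof (intro conjI ballI allI impI)
  show "VaR_plus_Lambda M \<Lambda> X \<le> ES_Lambda M \<Lambda> X" if "X \<in> D" for X
    using VaR_plus_Lambda_le_ES_Lambda[OF P _ \<Lambda>(2)] that D(1) by (auto simp: L1_def)
  show "quasi_convex_on D (ES_Lambda M \<Lambda>)"
    using ES_Lambda_quasi_convex[OF P D(1,2)] \<Lambda>(2) by (simp add: less_imp_le)
  show "law_invariant_on M D (ES_Lambda M \<Lambda>)"
    by (rule ES_Lambda_law_invariant[OF D(1)])
  show "ES_Lambda M \<Lambda> X \<le> \<rho> X"
    if "(\<forall>X\<in>D. VaR_plus_Lambda M \<Lambda> X \<le> \<rho> X) \<and> quasi_convex_on D \<rho> \<and> law_invariant_on M D \<rho>"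
      and "X \<in> D" for \<rho> X
    using that by (intro ES_Lambda_le_of_VaR_plus_Lambda_le[OF P atomless \<Lambda> D bdd]) auto
qed

theorem theorem6:
  fixes M :: "'a measure"
  assumes "prob_space M" and "atomless M"
  shows
   "(\<forall>\<Lambda>::real \<Rightarrow> real. antimono \<Lambda> \<and> (\<forall>x. 0 < \<Lambda> x \<and> \<Lambda> x \<le> 1) \<longrightarrow>
        is_min_qc_li_above M (L1 M) (VaR_Lambda M \<Lambda>) (ES_Lambda M \<Lambda>))
  \<and> (\<forall>\<Lambda>::real \<Rightarrow> real. antimono \<Lambda> \<and> (\<forall>x. 0 < \<Lambda> x \<and> \<Lambda> x < 1) \<longrightarrow>
        is_min_qc_li_above M (L1 M) (VaR_plus_Lambda M \<Lambda>) (ES_Lambda M \<Lambda>))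
  \<and> (\<forall>\<Lambda>::real \<Rightarrow> real. antimono \<Lambda> \<and> (\<forall>x. 0 \<le> \<Lambda> x \<and> \<Lambda> x < 1) \<longrightarrow>
        is_min_qc_li_above M (L1_bdd_below M) (VaR_plus_Lambda M \<Lambda>) (ES_Lambda M \<Lambda>))
  \<and> (\<forall>\<Lambda>::real \<Rightarrow> real. antimono \<Lambda> \<and> (\<forall>x. 0 \<le> \<Lambda> x \<and> \<Lambda> x \<le> 1) \<longrightarrow>
        (\<forall>X\<in>L1 M. ES_Lambda M \<Lambda> X = (INF x::real. max (ES M (\<Lambda> x) X) (ereal x))))"
proof (intro conjI allI impI ballI)
  fix \<Lambda> :: "real \<Rightarrow> real"
  show "is_min_qc_li_above M (L1 M) (VaR_Lambda M \<Lambda>) (ES_Lambda M \<Lambda>)"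
    if "antimono \<Lambda> \<and> (\<forall>x. 0 < \<Lambda> x \<and> \<Lambda> x \<le> 1)"
    using that assms by (intro is_min_ES_Lambda_VaR_Lambda) auto
  show "is_min_qc_li_above M (L1 M) (VaR_plus_Lambda M \<Lambda>) (ES_Lambda M \<Lambda>)"
    if "antimono \<Lambda> \<and> (\<forall>x. 0 < \<Lambda> x \<and> \<Lambda> x < 1)"
    using that assms convex_rv_set_L1 law_closed_L1
    by (intro is_min_ES_Lambda_VaR_plus_Lambda) (auto simp: less_imp_le)
  show "is_min_qc_li_above M (L1_bdd_below M) (VaR_plus_Lambda M \<Lambda>) (ES_Lambda M \<Lambda>)"
    if "antimono \<Lambda> \<and> (\<forall>x. 0 \<le> \<Lambda> x \<and> \<Lambda> x < 1)"
    using that assms convex_rv_set_L1_bdd_below law_closed_L1_bdd_below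
    by (intro is_min_ES_Lambda_VaR_plus_Lambda) (auto simp: L1_bdd_below_def L1_def)
  show "ES_Lambda M \<Lambda> X = (INF x. max (ES M (\<Lambda> x) X) (ereal x))"
    if "antimono \<Lambda> \<and> (\<forall>x. 0 \<le> \<Lambda> x \<and> \<Lambda> x \<le> 1)" and "X \<in> L1 M" for X
    using that assms by (intro ES_Lambda_eq_INF) (auto simp: L1_def)
qed

end
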